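(* $$\big\|\mathrm{Cov}(\hat{\mathcal{I}}_1(\theta))\big\|_\infty\le\frac1N\|\partial h_L(x)\|_\infty^4\,\big\|\mathcal{K}(t)-\mathcal{I}(h_L)\otimes\mathcal{I}(h_L)\big\|_1,$$ and, if $\sigma\in C^2(\mathbb{R})$, $$\big\|\mathrm{Cov}(\hat{\mathcal{I}}_2(\theta))\big\|_\infty\le\frac1N\|\partial^2h_L(x)\|_\infty^2\,\|\mathcal{I}(h_L)\|_1 .$$
   Context: Setup. Fix an input $x\in\mathbb{R}^{n_0}$ and integers $L\ge1$, $n_1,\dots,n_L\ge1$. Network. The parameters are $\theta=(W_0,\dots,W_{L-1})$, with $W_l\in\mathbb{R}^{n_{l+1}\times(n_l+1)}$, viewed as a vector in $\mathbb{R}^{\dim\theta}$. Let $\sigma$ be differentiable and applied entrywise. Set $h_0=x$ and $\bar h_l=(h_l^\top,1)^\top$. For $1\le l\le L-1$ let $h_l=\sigma(W_{l-1}\bar h_{l-1})$, and let $h_L=W_{L-1}\bar h_{L-1}\in\mathbb{R}^{n_L}$. Exponential family. The model is $p(y\mid x,\theta)=\exp(t(y)^\top h_L-F(h_L))$ with respect to a base measure $\nu$, where $t(y)\in\mathbb{R}^{n_L}$ and $F(h)=\log\int\exp(t(y)^\top h)\,d\nu(y)$. Assume $h_L$ lies in the interior of the natural parameter space. Let $\eta=\mathbb{E}[t(y)]$ and $\mathcal{I}(h_L)=\mathrm{Cov}(t(y))$, with $y\sim p(y\mid x,\theta)$. Estimators. With $N$ i.i.d. samples $y_i\sim p(y\mid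 x,\theta)$ and $\ell_i=\log p(y_i\mid x,\theta)$, let $\hat{\mathcal{I}}_1(\theta)=\frac1N\sum_i\frac{\partial\ell_i}{\partial\theta}\frac{\partial\ell_i}{\partial\theta^\top}$ and $\hat{\mathcal{I}}_2(\theta)=\frac1N\sum_i(-\frac{\partial^2\ell_i}{\partial\theta\partial\theta^\top})$. Notation. $\mathrm{Cov}(\hat{\mathcal{I}})$ is the 4-tensor with entries $\mathrm{Cov}(\hat{\mathcal{I}}^{ij},\hat{\mathcal{I}}^{kl})$. $\partial h_L$ is the $n_L\times\dim\theta$ Jacobian and $\partial^2h_L$ the $n_L\times\dim\theta\times\dim\theta$ tensor of second derivatives with respect to $\theta$. $\mathcal{K}_{abcd}(t)=\mathbb{E}[(t_a-\eta_a)(t_b-\eta_b)(t_c-\eta_c)(t_d-\eta_d)]$ and $(\mathcal{I}\otimes\mathcal{I})_{abcd}=\mathcal{I}_{ab}\mathcal{I}_{cd}$. For a tensor, $\|\cdot\|_\infty$ is the maximum absolute entry and $\|\cdot\|_1$ the sum of absolute entries. *)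

theory Defs
  imports "HOL-Probability.Probability"
begin

(* Parameter vector theta: entry (l,r,c) is W_l[r,c], with l < L, r < n_(l+1), c <= n_l;
   column c = n_l multiplies the constant 1 of the augmented vector (bias). *)
type_synonym param = "nat \<times> nat \<times> nat \<Rightarrow> real"

definition param_idx :: "nat \<Rightarrow> (nat \<Rightarrow> nat) \<Rightarrow> (nat \<times> nat \<times> nat) set" where
  "param_idx L n = {(l, r, c). l < L \<and> r < n (Suc l) \<and> c \<le> n l}"

fun hidden :: "(real \<Rightarrow> real) \<Rightarrow> (nat \<Rightarrow> nat) \<Rightarrow> (nat \<Rightarrow> real) \<Rightarrow> param \<Rightarrow> nat \<Rightarrow> nat \<Rightarrow> real" where
  "hidden \<sigma> n x \<theta> 0 r = x r"
| "hidden \<sigma> n x \<theta> (Suc l) r =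
     \<sigma> ((\<Sum>c<n l. \<theta> (l, r, c) * hidden \<sigma> n x \<theta> l c) + \<theta> (l, r, n l))"

definition net_out :: "(real \<Rightarrow> real) \<Rightarrow> nat \<Rightarrow> (nat \<Rightarrow> nat) \<Rightarrow> (nat \<Rightarrow> real) \<Rightarrow> param \<Rightarrow> nat \<Rightarrow> real" where
  "net_out \<sigma> L n x \<theta> r =
     (\<Sum>c<n (L - 1). \<theta> (L - 1, r, c) * hidden \<sigma> n x \<theta> (L - 1) c) + \<theta> (L - 1, r, n (L - 1))"

definition partial_deriv :: "(param \<Rightarrow> real) \<Rightarrow> param \<Rightarrow> nat \<times> nat \<times> nat \<Rightarrow> real" where
  "partial_deriv f \<theta> j = deriv (\<lambda>s. f (\<theta>(j := s))) (\<theta> j)"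

definition C2_fun :: "(real \<Rightarrow> real) \<Rightarrow> bool" where
  "C2_fun \<sigma> = (\<exists>\<sigma>' \<sigma>''. (\<forall>z. (\<sigma> has_real_derivative \<sigma>' z) (at z)
                          \<and> (\<sigma>' has_real_derivative \<sigma>'' z) (at z))
                     \<and> continuous_on UNIV \<sigma>'')"

definition tdot :: "nat \<Rightarrow> ('y \<Rightarrow> nat \<Rightarrow> real) \<Rightarrow> 'y \<Rightarrow> (nat \<Rightarrow> real) \<Rightarrow> real" where
  "tdot m t y h = (\<Sum>a<m. t y a * h a)"

definition partition_int :: "'y measure \<Rightarrow> nat \<Rightarrow> ('y \<Rightarrow> nat \<Rightarrow> real) \<Rightarrow> (nat \<Rightarrow> real) \<Rightarrow> ennreal" where
  "partition_int \<nu> m t h = (\<integral>\<^sup>+ y. ennreal (exp (tdot m t y h)) \<partial>\<nu>)"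

definition log_partition :: "'y measure \<Rightarrow> nat \<Rightarrow> ('y \<Rightarrow> nat \<Rightarrow> real) \<Rightarrow> (nat \<Rightarrow> real) \<Rightarrow> real" where
  "log_partition \<nu> m t h = ln (enn2real (partition_int \<nu> m t h))"

definition nat_param_space :: "'y measure \<Rightarrow> nat \<Rightarrow> ('y \<Rightarrow> nat \<Rightarrow> real) \<Rightarrow> (nat \<Rightarrow> real) set" where
  "nat_param_space \<nu> m t = {h. 0 < partition_int \<nu> m t h \<and> partition_int \<nu> m t h < \<infinity>}"

definition in_interior_nps :: "'y measure \<Rightarrow> nat \<Rightarrow> ('y \<Rightarrow> nat \<Rightarrow> real) \<Rightarrow> (nat \<Rightarrow> real) \<Rightarrow> bool" where
  "in_interior_nps \<nu> m t h =
     (\<exists>e>0. \<forall>h'. (\<forall>a<m. \<bar>h' a - h a\<bar> < e) \<longrightarrow> h' \<in> nat_param_space \<nu> m t)"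

definition expfam_dens :: "'y measure \<Rightarrow> nat \<Rightarrow> ('y \<Rightarrow> nat \<Rightarrow> real) \<Rightarrow> (nat \<Rightarrow> real) \<Rightarrow> 'y \<Rightarrow> real" where
  "expfam_dens \<nu> m t h y = exp (tdot m t y h - log_partition \<nu> m t h)"

definition expfam :: "'y measure \<Rightarrow> nat \<Rightarrow> ('y \<Rightarrow> nat \<Rightarrow> real) \<Rightarrow> (nat \<Rightarrow> real) \<Rightarrow> 'y measure" where
  "expfam \<nu> m t h = density \<nu> (\<lambda>y. ennreal (expfam_dens \<nu> m t h y))"

definition mean_stat :: "'y measure \<Rightarrow> nat \<Rightarrow> ('y \<Rightarrow> nat \<Rightarrow> real) \<Rightarrow> (nat \<Rightarrow> real) \<Rightarrow> nat \<Rightarrow> real" where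
  "mean_stat \<nu> m t h a = (\<integral> y. t y a \<partial>(expfam \<nu> m t h))"

definition fisher_h :: "'y measure \<Rightarrow> nat \<Rightarrow> ('y \<Rightarrow> nat \<Rightarrow> real) \<Rightarrow> (nat \<Rightarrow> real) \<Rightarrow> nat \<Rightarrow> nat \<Rightarrow> real" where
  "fisher_h \<nu> m t h a b =
     (\<integral> y. (t y a - mean_stat \<nu> m t h a) * (t y b - mean_stat \<nu> m t h b) \<partial>(expfam \<nu> m t h))"

definition kurt_t :: "'y measure \<Rightarrow> nat \<Rightarrow> ('y \<Rightarrow> nat \<Rightarrow> real) \<Rightarrow> (nat \<Rightarrow> real) \<Rightarrow> nat \<Rightarrow> nat \<Rightarrow> nat \<Rightarrow> nat \<Rightarrow> real" where
  "kurt_t \<nu> m t h a b c d =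
     (\<integral> y. (t y a - mean_stat \<nu> m t h a) * (t y b - mean_stat \<nu> m t h b)
          * (t y c - mean_stat \<nu> m t h c) * (t y d - mean_stat \<nu> m t h d) \<partial>(expfam \<nu> m t h))"

definition loglik :: "(real \<Rightarrow> real) \<Rightarrow> nat \<Rightarrow> (nat \<Rightarrow> nat) \<Rightarrow> (nat \<Rightarrow> real) \<Rightarrow> 'y measure
                      \<Rightarrow> ('y \<Rightarrow> nat \<Rightarrow> real) \<Rightarrow> 'y \<Rightarrow> param \<Rightarrow> real" where
  "loglik \<sigma> L n x \<nu> t y \<theta> = ln (expfam_dens \<nu> (n L) t (net_out \<sigma> L n x \<theta>) y)"

definition Ihat1 :: "(real \<Rightarrow> real) \<Rightarrow> nat \<Rightarrow> (nat \<Rightarrow> nat) \<Rightarrow> (nat \<Rightarrow> real) \<Rightarrow> 'y measure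
                      \<Rightarrow> ('y \<Rightarrow> nat \<Rightarrow> real) \<Rightarrow> nat \<Rightarrow> param \<Rightarrow> (nat \<Rightarrow> 'y)
                      \<Rightarrow> nat \<times> nat \<times> nat \<Rightarrow> nat \<times> nat \<times> nat \<Rightarrow> real" where
  "Ihat1 \<sigma> L n x \<nu> t N \<theta> \<omega> j k =
     (1 / real N) * (\<Sum>i<N. partial_deriv (loglik \<sigma> L n x \<nu> t (\<omega> i)) \<theta> j
                          * partial_deriv (loglik \<sigma> L n x \<nu> t (\<omega> i)) \<theta> k)"

definition Ihat2 :: "(real \<Rightarrow> real) \<Rightarrow> nat \<Rightarrow> (nat \<Rightarrow> nat) \<Rightarrow> (nat \<Rightarrow> real) \<Rightarrow> 'y measure
                      \<Rightarrow> ('y \<Rightarrow> nat \<Rightarrow> real) \<Rightarrow> nat \<Rightarrow> param \<Rightarrow> (nat \<Rightarrow> 'y)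
                      \<Rightarrow> nat \<times> nat \<times> nat \<Rightarrow> nat \<times> nat \<times> nat \<Rightarrow> real" where
  "Ihat2 \<sigma> L n x \<nu> t N \<theta> \<omega> j k =
     (1 / real N) * (\<Sum>i<N. - partial_deriv
                              (\<lambda>\<theta>'. partial_deriv (loglik \<sigma> L n x \<nu> t (\<omega> i)) \<theta>' k) \<theta> j)"

definition cov :: "'a measure \<Rightarrow> ('a \<Rightarrow> real) \<Rightarrow> ('a \<Rightarrow> real) \<Rightarrow> real" where
  "cov M X Y = (\<integral> \<omega>. (X \<omega> - (\<integral> \<omega>'. X \<omega>' \<partial>M)) * (Y \<omega> - (\<integral> \<omega>'. Y \<omega>' \<partial>M)) \<partial>M)"

definition norm_inf :: "('i \<Rightarrow> real) \<Rightarrow> 'i set \<Rightarrow> real" where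
  "norm_inf T S = Max ((\<lambda>i. \<bar>T i\<bar>) ` S)"

definition norm_one :: "('i \<Rightarrow> real) \<Rightarrow> 'i set \<Rightarrow> real" where
  "norm_one T S = (\<Sum>i\<in>S. \<bar>T i\<bar>)"

end

theory Submission
  imports Defs
begin

text \<open>Both estimators are sample means of i.i.d. terms, so every covariance entry is \<open>1/N\<close> times
  the covariance of a single term. Since the gradient of the log-partition function \<open>F\<close> is the
  mean \<open>\<eta>\<close> and its Hessian is the Fisher matrix \<open>I\<close>, the score is \<open>\<partial>h\<^sub>L\<^sup>T u\<close> with the centred
  statistic \<open>u = t(y) - \<eta>\<close>, and minus the Hessian of the log-likelihood is a constant minus
  \<open>\<partial>\<^sup>2h\<^sub>L\<^sup>T u\<close>. A term of the first estimator is therefore a quadratic form in \<open>u\<close>, whose covariance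
  contracts four copies of \<open>\<partial>h\<^sub>L\<close> with \<open>K - I \<otimes> I\<close>; a term of the second is affine in \<open>u\<close>, whose
  covariance contracts two copies of \<open>\<partial>\<^sup>2h\<^sub>L\<close> with \<open>I\<close>. Bounding the derivative entries by their
  maximum gives the two estimates.

  The derivatives of \<open>F\<close> come from differentiating under the integral sign. This is justified
  because \<open>h\<^sub>L\<close> is interior to the natural parameter space: a box around it lies in that space,
  and summing the densities at its \<open>2\<^sup>m\<close> corners dominates \<open>exp (\<rho> \<parallel>t(y)\<parallel>\<^sub>1)\<close>, so all
  polynomial moments of \<open>t\<close> are finite near \<open>h\<^sub>L\<close>.\<close>

section \<open>Partial derivatives in the parameters\<close>

definition partially_differentiable :: "(param \<Rightarrow> real) \<Rightarrow> bool" where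
  "partially_differentiable f \<longleftrightarrow> (\<forall>\<theta> k. (\<lambda>s. f (\<theta>(k := s))) differentiable (at (\<theta> k)))"

definition twice_partially_differentiable :: "(param \<Rightarrow> real) \<Rightarrow> bool" where
  "twice_partially_differentiable f \<longleftrightarrow>
     partially_differentiable f \<and> (\<forall>k. partially_differentiable (\<lambda>\<theta>. partial_deriv f \<theta> k))"

lemma has_real_derivative_partial_deriv:
  assumes "partially_differentiable f"
  shows "((\<lambda>s. f (\<theta>(k := s))) has_real_derivative partial_deriv f \<theta> k) (at (\<theta> k))"
proof -
  have "(\<lambda>s. f (\<theta>(k := s))) differentiable (at (\<theta> k))"
    using assms unfolding partially_differentiable_def by blast
  then show ?thesis
    unfolding partial_deriv_def by (simp add: DERIV_deriv_iff_real_differentiable)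
qed

lemma partial_deriv_eqI:
  assumes "((\<lambda>s. f (\<theta>(k := s))) has_real_derivative D) (at (\<theta> k))"
  shows "partial_deriv f \<theta> k = D"
  using assms unfolding partial_deriv_def by (rule DERIV_imp_deriv)

lemma partially_differentiableI:
  assumes "\<And>\<theta> k. \<exists>D. ((\<lambda>s. f (\<theta>(k := s))) has_real_derivative D) (at (\<theta> k))"
  shows "partially_differentiable f"
  using assms unfolding partially_differentiable_def by (meson real_differentiable_def)

lemma has_real_derivative_coordinate:
  "((\<lambda>s. (\<theta>(k := s)) p) has_real_derivative (if p = k then 1 else 0)) (at s0)"
  by (cases "p = k") (auto intro: derivative_eq_intros)

lemma partially_differentiable_const: "partially_differentiable (\<lambda>\<theta>. c)"
  by (rule partially_differentiableI) (auto intro: derivative_eq_intros)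

lemma partial_deriv_const: "partial_deriv (\<lambda>\<theta>. c) \<theta> k = 0"
  by (rule partial_deriv_eqI) (auto intro: derivative_eq_intros)

lemma partially_differentiable_coordinate: "partially_differentiable (\<lambda>\<theta>. \<theta> p)"
  by (rule partially_differentiableI, rule exI, rule has_real_derivative_coordinate)

lemma partial_deriv_coordinate: "partial_deriv (\<lambda>\<theta>. \<theta> p) \<theta> k = (if p = k then 1 else 0)"
  by (rule partial_deriv_eqI) (rule has_real_derivative_coordinate)

lemma partially_differentiable_add:
  "partially_differentiable f \<Longrightarrow> partially_differentiable g \<Longrightarrow>
   partially_differentiable (\<lambda>\<theta>. f \<theta> + g \<theta>)"
  by (rule partially_differentiableI) (use has_real_derivative_partial_deriv DERIV_add in blast)

lemma partial_deriv_add: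
  "partially_differentiable f \<Longrightarrow> partially_differentiable g \<Longrightarrow>
   partial_deriv (\<lambda>\<theta>. f \<theta> + g \<theta>) \<theta> k = partial_deriv f \<theta> k + partial_deriv g \<theta> k"
  by (rule partial_deriv_eqI) (rule DERIV_add; rule has_real_derivative_partial_deriv)

lemma partially_differentiable_mult:
  "partially_differentiable f \<Longrightarrow> partially_differentiable g \<Longrightarrow>
   partially_differentiable (\<lambda>\<theta>. f \<theta> * g \<theta>)"
  by (rule partially_differentiableI) (use has_real_derivative_partial_deriv DERIV_mult in blast)

lemma partial_deriv_mult:
  assumes "partially_differentiable f" "partially_differentiable g"
  shows "partial_deriv (\<lambda>\<theta>. f \<theta> * g \<theta>) \<theta> k = partial_deriv f \<theta> k * g \<theta> + f \<theta> * partial_deriv g \<theta> k"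
proof -
  have "((\<lambda>s. f (\<theta>(k := s)) * g (\<theta>(k := s))) has_real_derivative
          partial_deriv f \<theta> k * g \<theta> + partial_deriv g \<theta> k * f \<theta>) (at (\<theta> k))"
    using DERIV_mult[OF has_real_derivative_partial_deriv[OF assms(1), of \<theta> k]
        has_real_derivative_partial_deriv[OF assms(2), of \<theta> k]] by simp
  then show ?thesis by (intro partial_deriv_eqI) (simp add: algebra_simps)
qed

lemma partially_differentiable_sum:
  "finite A \<Longrightarrow> (\<And>i. i \<in> A \<Longrightarrow> partially_differentiable (f i)) \<Longrightarrow>
   partially_differentiable (\<lambda>\<theta>. \<Sum>i\<in>A. f i \<theta>)"
  by (induction A rule: finite_induct)
     (auto intro: partially_differentiable_const partially_differentiable_add)

lemma partially_differentiable_comp: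
  assumes "\<forall>z. \<sigma> differentiable (at z)" "partially_differentiable f"
  shows "partially_differentiable (\<lambda>\<theta>. \<sigma> (f \<theta>))"
  unfolding partially_differentiable_def
proof (intro allI)
  fix \<theta> k
  have "(\<lambda>s. f (\<theta>(k := s))) differentiable (at (\<theta> k))"
    using assms(2) unfolding partially_differentiable_def by blast
  then have "(\<sigma> \<circ> (\<lambda>s. f (\<theta>(k := s)))) differentiable (at (\<theta> k))"
    using assms(1) by (intro differentiable_chain_at) auto
  then show "(\<lambda>s. \<sigma> (f (\<theta>(k := s)))) differentiable (at (\<theta> k))" by (simp add: o_def)
qed

lemma partial_deriv_comp:
  assumes "\<And>z. (\<sigma> has_real_derivative \<sigma>' z) (at z)" "partially_differentiable f"
  shows "partial_deriv (\<lambda>\<theta>. \<sigma> (f \<theta>)) \<theta> k = \<sigma>' (f \<theta>) * partial_deriv f \<theta> k"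
  using DERIV_chain2[OF assms(1) has_real_derivative_partial_deriv[OF assms(2)]]
  by (intro partial_deriv_eqI) simp

lemma twice_partially_differentiable_const: "twice_partially_differentiable (\<lambda>\<theta>. c)"
  unfolding twice_partially_differentiable_def
  by (simp add: partially_differentiable_const partial_deriv_const)

lemma twice_partially_differentiable_coordinate: "twice_partially_differentiable (\<lambda>\<theta>. \<theta> p)"
  unfolding twice_partially_differentiable_def
  by (simp add: partially_differentiable_coordinate partial_deriv_coordinate partially_differentiable_const)

lemma twice_partially_differentiable_add:
  "twice_partially_differentiable f \<Longrightarrow> twice_partially_differentiable g \<Longrightarrow>
   twice_partially_differentiable (\<lambda>\<theta>. f \<theta> + g \<theta>)"
  unfolding twice_partially_differentiable_def
  by (simp add: partial_deriv_add partially_differentiable_add)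

lemma twice_partially_differentiable_mult:
  "twice_partially_differentiable f \<Longrightarrow> twice_partially_differentiable g \<Longrightarrow>
   twice_partially_differentiable (\<lambda>\<theta>. f \<theta> * g \<theta>)"
  unfolding twice_partially_differentiable_def
  by (simp add: partial_deriv_mult partially_differentiable_add partially_differentiable_mult)

lemma twice_partially_differentiable_sum:
  "finite A \<Longrightarrow> (\<And>i. i \<in> A \<Longrightarrow> twice_partially_differentiable (f i)) \<Longrightarrow>
   twice_partially_differentiable (\<lambda>\<theta>. \<Sum>i\<in>A. f i \<theta>)"
  by (induction A rule: finite_induct)
     (auto intro: twice_partially_differentiable_const twice_partially_differentiable_add)

lemma twice_partially_differentiable_comp:
  assumes "C2_fun \<sigma>" "twice_partially_differentiable f"
  shows "twice_partially_differentiable (\<lambda>\<theta>. \<sigma> (f \<theta>))"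
proof -
  obtain \<sigma>' \<sigma>'' where \<sigma>': "\<And>z. (\<sigma> has_real_derivative \<sigma>' z) (at z)"
    and \<sigma>'': "\<And>z. (\<sigma>' has_real_derivative \<sigma>'' z) (at z)"
    using assms(1) unfolding C2_fun_def by blast
  have "\<forall>z. \<sigma> differentiable (at z)" "\<forall>z. \<sigma>' differentiable (at z)"
    using \<sigma>' \<sigma>'' real_differentiable_def by blast+
  with assms(2) show ?thesis
    unfolding twice_partially_differentiable_def
    by (simp add: partial_deriv_comp[OF \<sigma>'] partially_differentiable_comp partially_differentiable_mult)
qed

lemma partially_differentiable_hidden:
  assumes "\<forall>z. \<sigma> differentiable (at z)"
  shows "partially_differentiable (\<lambda>\<theta>. hidden \<sigma> n x \<theta> l r)"
proof (induction l arbitrary: r)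
  case 0
  show ?case by (simp add: partially_differentiable_const)
next
  case (Suc l)
  show ?case
    by (simp, intro partially_differentiable_comp[OF assms] partially_differentiable_add
        partially_differentiable_sum partially_differentiable_mult partially_differentiable_coordinate Suc)
       auto
qed

lemma twice_partially_differentiable_hidden:
  assumes "C2_fun \<sigma>"
  shows "twice_partially_differentiable (\<lambda>\<theta>. hidden \<sigma> n x \<theta> l r)"
proof (induction l arbitrary: r)
  case 0
  show ?case by (simp add: twice_partially_differentiable_const)
next
  case (Suc l)
  show ?case
    by (simp, intro twice_partially_differentiable_comp[OF assms] twice_partially_differentiable_add
        twice_partially_differentiable_sum twice_partially_differentiable_mult
        twice_partially_differentiable_coordinate Suc)
       auto
qed

lemma partially_differentiable_net_out:
  assumes "\<forall>z. \<sigma> differentiable (at z)"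
  shows "partially_differentiable (\<lambda>\<theta>. net_out \<sigma> L n x \<theta> a)"
  unfolding net_out_def
  by (intro partially_differentiable_add partially_differentiable_sum partially_differentiable_mult
      partially_differentiable_coordinate partially_differentiable_hidden[OF assms]) auto

lemma twice_partially_differentiable_net_out:
  assumes "C2_fun \<sigma>"
  shows "twice_partially_differentiable (\<lambda>\<theta>. net_out \<sigma> L n x \<theta> a)"
  unfolding net_out_def
  by (intro twice_partially_differentiable_add twice_partially_differentiable_sum
      twice_partially_differentiable_mult twice_partially_differentiable_coordinate
      twice_partially_differentiable_hidden[OF assms]) auto

section \<open>Differentiating through a quadratic approximation\<close>

lemma abs_exp_minus_one_minus_le: "\<bar>exp x - 1 - x\<bar> \<le> exp \<bar>x\<bar> * (x::real)\<^sup>2"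
proof -
  obtain \<tau> :: real where \<tau>: "\<bar>\<tau>\<bar> \<le> \<bar>x\<bar>" "exp x = (\<Sum>m<2. x ^ m / fact m) + exp \<tau> / fact 2 * x ^ 2"
    using Maclaurin_exp_le[of x 2] by blast
  then have "\<bar>exp x - 1 - x\<bar> = exp \<tau> / 2 * x\<^sup>2" by (simp add: numeral_2_eq_2)
  also have "\<dots> \<le> exp \<tau> * x\<^sup>2" by simp
  also have "\<dots> \<le> exp \<bar>x\<bar> * x\<^sup>2" using \<tau>(1) by (intro mult_right_mono) auto
  finally show ?thesis .
qed

lemma one_plus_power_le_exp:
  fixes x \<rho> :: real
  assumes "x \<ge> 0" "\<rho> > 0"
  shows "(1 + x) ^ k \<le> (real (Suc k) / \<rho>) ^ Suc k * exp \<rho> * exp (\<rho> * x)"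
proof -
  define K where "K = real (Suc k)"
  have K: "K > 0" unfolding K_def by simp
  have "(\<rho> * (1 + x) / K) ^ Suc k \<le> exp (\<rho> * (1 + x) / K) ^ Suc k"
    using assms K by (intro power_mono order_trans[OF _ exp_ge_add_one_self]) auto
  also have "\<dots> = exp (\<rho> * (1 + x))"
    unfolding K_def by (rule exp_divide_power_eq) simp
  finally have exp_bound: "(\<rho> * (1 + x) / K) ^ Suc k \<le> exp (\<rho> * (1 + x))" .
  have "(1 + x) ^ k \<le> (1 + x) ^ Suc k" using assms by (intro power_increasing) auto
  also have "\<dots> = (K / \<rho>) ^ Suc k * (\<rho> * (1 + x) / K) ^ Suc k"
    using K assms by (simp add: power_mult_distrib[symmetric])
  also have "\<dots> \<le> (K / \<rho>) ^ Suc k * exp (\<rho> * (1 + x))"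
    using exp_bound K assms by (intro mult_left_mono) auto
  also have "\<dots> = (K / \<rho>) ^ Suc k * exp \<rho> * exp (\<rho> * x)"
    by (simp add: distrib_left exp_add)
  finally show ?thesis unfolding K_def .
qed

lemma quadratic_remainder_quotient_tendsto_zero:
  fixes \<Phi> :: "(nat \<Rightarrow> real) \<Rightarrow> real" and g :: "real \<Rightarrow> nat \<Rightarrow> real"
  assumes quad: "\<And>v. (\<forall>a<m. \<bar>v a\<bar> \<le> \<delta>) \<Longrightarrow>
          \<bar>\<Phi> (\<lambda>a. h a + v a) - \<Phi> h - (\<Sum>a<m. D a * v a)\<bar> \<le> C * (\<Sum>a<m. \<bar>v a\<bar>)\<^sup>2"
    and \<delta>: "\<delta> > 0"
    and g: "\<And>a. a < m \<Longrightarrow> ((\<lambda>s. (g s a - h a) / (s - s0)) \<longlongrightarrow> g' a) (at s0)"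
    and g_cont: "\<And>a. a < m \<Longrightarrow> ((\<lambda>s. g s a) \<longlongrightarrow> h a) (at s0)"
  shows "((\<lambda>s. (\<Phi> (g s) - \<Phi> h - (\<Sum>a<m. D a * (g s a - h a))) / (s - s0)) \<longlongrightarrow> 0) (at s0)"
proof -
  define V where "V s = (\<Sum>a<m. \<bar>g s a - h a\<bar>)" for s
  have near: "\<forall>\<^sub>F s in at s0. \<forall>a\<in>{..<m}. \<bar>g s a - h a\<bar> \<le> \<delta>"
  proof (intro eventually_ball_finite ballI)
    fix a assume "a \<in> {..<m}"
    then have "\<forall>\<^sub>F s in at s0. dist (g s a) (h a) < \<delta>" using tendstoD[OF g_cont \<delta>] by auto
    then show "\<forall>\<^sub>F s in at s0. \<bar>g s a - h a\<bar> \<le> \<delta>"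
      by eventually_elim (simp add: dist_real_def)
  qed auto
  have bound: "\<forall>\<^sub>F s in at s0. norm ((\<Phi> (g s) - \<Phi> h - (\<Sum>a<m. D a * (g s a - h a))) / (s - s0))
          \<le> C * V s * (\<Sum>a<m. \<bar>(g s a - h a) / (s - s0)\<bar>)"
    using near
  proof eventually_elim
    case (elim s)
    have "\<bar>\<Phi> (g s) - \<Phi> h - (\<Sum>a<m. D a * (g s a - h a))\<bar> \<le> C * (V s)\<^sup>2"
      using quad[of "\<lambda>a. g s a - h a"] elim unfolding V_def by simp
    then have "\<bar>\<Phi> (g s) - \<Phi> h - (\<Sum>a<m. D a * (g s a - h a))\<bar> / \<bar>s - s0\<bar>
          \<le> C * V s * (V s / \<bar>s - s0\<bar>)"
      by (simp add: divide_right_mono power2_eq_square)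
    moreover have "(\<Sum>a<m. \<bar>(g s a - h a) / (s - s0)\<bar>) = V s / \<bar>s - s0\<bar>"
      unfolding V_def by (simp add: sum_divide_distrib abs_divide)
    ultimately show ?case by (simp add: abs_divide)
  qed
  have "((\<lambda>s. C * V s * (\<Sum>a<m. \<bar>(g s a - h a) / (s - s0)\<bar>)) \<longlongrightarrow>
                  C * (\<Sum>a<m. \<bar>h a - h a\<bar>) * (\<Sum>a<m. \<bar>g' a\<bar>)) (at s0)"
    unfolding V_def by (intro tendsto_intros g g_cont) auto
  then have "((\<lambda>s. C * V s * (\<Sum>a<m. \<bar>(g s a - h a) / (s - s0)\<bar>)) \<longlongrightarrow> 0) (at s0)"
    by simp
  then show ?thesis by (rule Lim_null_comparison[OF bound])
qed

lemma DERIV_comp_quadratic_approx: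
  fixes \<Phi> :: "(nat \<Rightarrow> real) \<Rightarrow> real" and g :: "real \<Rightarrow> nat \<Rightarrow> real"
  assumes quad: "\<And>v. (\<forall>a<m. \<bar>v a\<bar> \<le> \<delta>) \<Longrightarrow>
          \<bar>\<Phi> (\<lambda>a. h a + v a) - \<Phi> h - (\<Sum>a<m. D a * v a)\<bar> \<le> C * (\<Sum>a<m. \<bar>v a\<bar>)\<^sup>2"
    and \<delta>: "\<delta> > 0" and g0: "g s0 = h"
    and g: "\<And>a. a < m \<Longrightarrow> ((\<lambda>s. g s a) has_real_derivative g' a) (at s0)"
  shows "((\<lambda>s. \<Phi> (g s)) has_real_derivative (\<Sum>a<m. D a * g' a)) (at s0)"
proof -
  have quot: "((\<lambda>s. (g s a - h a) / (s - s0)) \<longlongrightarrow> g' a) (at s0)" if "a < m" for a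
    using g[OF that] g0 unfolding has_field_derivative_iff by simp
  have cont: "((\<lambda>s. g s a) \<longlongrightarrow> h a) (at s0)" if "a < m" for a
    using DERIV_isCont[OF g[OF that]] g0 unfolding isCont_def by simp
  have "(\<Phi> (g s) - \<Phi> (g s0)) / (s - s0) =
        (\<Sum>a<m. D a * ((g s a - h a) / (s - s0)))
        + (\<Phi> (g s) - \<Phi> h - (\<Sum>a<m. D a * (g s a - h a))) / (s - s0)" for s
  proof -
    have "(\<Sum>a<m. D a * ((g s a - h a) / (s - s0))) = (\<Sum>a<m. D a * (g s a - h a)) / (s - s0)"
      by (simp add: sum_divide_distrib)
    then show ?thesis unfolding g0 by (simp add: diff_divide_distrib)
  qed
  moreover have "((\<lambda>s. (\<Sum>a<m. D a * ((g s a - h a) / (s - s0)))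
        + (\<Phi> (g s) - \<Phi> h - (\<Sum>a<m. D a * (g s a - h a))) / (s - s0)) \<longlongrightarrow> (\<Sum>a<m. D a * g' a) + 0) (at s0)"
    by (intro tendsto_add tendsto_sum tendsto_mult tendsto_const quot
        quadratic_remainder_quotient_tendsto_zero[OF quad \<delta> quot cont]) auto
  ultimately show ?thesis unfolding has_field_derivative_iff by simp
qed

section \<open>Exponential families\<close>

lemma exp_mult_sum_abs_le:
  fixes z :: "'a \<Rightarrow> real"
  assumes "finite A" "\<rho> \<ge> 0"
  shows "exp (\<rho> * (\<Sum>a\<in>A. \<bar>z a\<bar>))
           \<le> (\<Sum>X\<in>Pow A. (\<Prod>a\<in>X. exp (\<rho> * z a)) * (\<Prod>a\<in>A - X. exp (- \<rho> * z a)))"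
proof -
  have "exp (\<rho> * (\<Sum>a\<in>A. \<bar>z a\<bar>)) = (\<Prod>a\<in>A. exp (\<rho> * \<bar>z a\<bar>))"
    using assms(1) by (simp add: sum_distrib_left exp_sum)
  also have "\<dots> \<le> (\<Prod>a\<in>A. exp (\<rho> * z a) + exp (- \<rho> * z a))"
    using assms(2)
    by (intro prod_mono) (auto simp: abs_if add_increasing add_increasing2)
  also have "\<dots> = (\<Sum>X\<in>Pow A. (\<Prod>a\<in>X. exp (\<rho> * z a)) * (\<Prod>a\<in>A - X. exp (- \<rho> * z a)))"
    by (rule prod_add) (rule assms(1))
  finally show ?thesis .
qed

locale exp_family =
  fixes \<nu> :: "'y measure" and m :: nat and t :: "'y \<Rightarrow> nat \<Rightarrow> real"
  assumes measurable_t: "\<And>a. a < m \<Longrightarrow> (\<lambda>y. t y a) \<in> borel_measurable \<nu>"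
begin

abbreviation Pr :: "(nat \<Rightarrow> real) \<Rightarrow> 'y measure" where
  "Pr h \<equiv> expfam \<nu> m t h"

definition tnorm :: "'y \<Rightarrow> real" where
  "tnorm y = (\<Sum>a<m. \<bar>t y a\<bar>)"

definition weight :: "(nat \<Rightarrow> real) \<Rightarrow> 'y \<Rightarrow> real" where
  "weight h y = exp (tdot m t y h)"

definition Z :: "(nat \<Rightarrow> real) \<Rightarrow> real" where
  "Z h = enn2real (partition_int \<nu> m t h)"

definition interior_radius :: "(nat \<Rightarrow> real) \<Rightarrow> real \<Rightarrow> bool" where
  "interior_radius h e \<longleftrightarrow>
     e > 0 \<and> (\<forall>h'. (\<forall>a<m. \<bar>h' a - h a\<bar> < e) \<longrightarrow> h' \<in> nat_param_space \<nu> m t)"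

lemma measurable_tdot [measurable]: "(\<lambda>y. tdot m t y h) \<in> borel_measurable \<nu>"
  unfolding tdot_def using measurable_t by measurable

lemma measurable_tnorm [measurable]: "tnorm \<in> borel_measurable \<nu>"
  unfolding tnorm_def using measurable_t by measurable

lemma measurable_weight [measurable]: "weight h \<in> borel_measurable \<nu>"
  unfolding weight_def by measurable

lemma weight_pos: "weight h y > 0"
  unfolding weight_def by simp

lemma tnorm_nonneg: "tnorm y \<ge> 0"
  unfolding tnorm_def by (simp add: sum_nonneg)

lemma abs_t_le_tnorm: "a < m \<Longrightarrow> \<bar>t y a\<bar> \<le> tnorm y"
  unfolding tnorm_def by (rule member_le_sum) auto

lemma abs_t_le_one_plus_tnorm: "a < m \<Longrightarrow> \<bar>t y a\<bar> \<le> 1 + tnorm y"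
  using abs_t_le_tnorm[of a y] by simp

lemma abs_tdot_le_tnorm:
  assumes "\<forall>a<m. \<bar>v a\<bar> \<le> d"
  shows "\<bar>tdot m t y v\<bar> \<le> tnorm y * d" and "\<bar>tdot m t y v\<bar> \<le> tnorm y * (\<Sum>a<m. \<bar>v a\<bar>)"
proof -
  have "\<bar>tdot m t y v\<bar> \<le> (\<Sum>a<m. \<bar>t y a\<bar> * \<bar>v a\<bar>)"
    unfolding tdot_def by (rule order_trans[OF sum_abs]) (simp add: abs_mult)
  moreover have "(\<Sum>a<m. \<bar>t y a\<bar> * \<bar>v a\<bar>) \<le> tnorm y * d"
    unfolding tnorm_def sum_distrib_right using assms by (intro sum_mono mult_left_mono) auto
  moreover have "(\<Sum>a<m. \<bar>t y a\<bar> * \<bar>v a\<bar>) \<le> tnorm y * (\<Sum>a<m. \<bar>v a\<bar>)"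
    unfolding tnorm_def sum_distrib_right by (intro sum_mono mult_left_mono member_le_sum) auto
  ultimately show "\<bar>tdot m t y v\<bar> \<le> tnorm y * d" "\<bar>tdot m t y v\<bar> \<le> tnorm y * (\<Sum>a<m. \<bar>v a\<bar>)"
    by linarith+
qed

lemma weight_add: "weight (\<lambda>a. h a + v a) y = weight h y * exp (tdot m t y v)"
  unfolding weight_def tdot_def by (simp add: distrib_left sum.distrib exp_add)

lemma integrable_weight:
  assumes "h \<in> nat_param_space \<nu> m t"
  shows "integrable \<nu> (weight h)"
proof -
  have "partition_int \<nu> m t h < \<infinity>" using assms unfolding nat_param_space_def by auto
  then have "(\<integral>\<^sup>+ y. ennreal (weight h y) \<partial>\<nu>) = ennreal (enn2real (partition_int \<nu> m t h))"
    unfolding partition_int_def weight_def by (simp add: ennreal_enn2real_if)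
  then show ?thesis
    by (intro integrableI_nn_integral_finite) (auto simp: less_imp_le[OF weight_pos])
qed

lemma Z_eq_integral: "Z h = integral\<^sup>L \<nu> (weight h)"
  unfolding Z_def partition_int_def weight_def
  by (rule enn2real_nn_integral_eq_integral) (auto simp: less_imp_le)

lemma Z_pos: "h \<in> nat_param_space \<nu> m t \<Longrightarrow> Z h > 0"
  unfolding Z_def nat_param_space_def by (simp add: enn2real_positive_iff)

lemma interior_radius_pos: "interior_radius h e \<Longrightarrow> e > 0"
  unfolding interior_radius_def by simp

lemma interior_radius_nps:
  "interior_radius h e \<Longrightarrow> \<forall>a<m. \<bar>h' a - h a\<bar> < e \<Longrightarrow> h' \<in> nat_param_space \<nu> m t"
  unfolding interior_radius_def by blast

lemma interior_radius_center: "interior_radius h e \<Longrightarrow> h \<in> nat_param_space \<nu> m t"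
  by (rule interior_radius_nps) (auto dest: interior_radius_pos)

lemma interior_radius_half:
  assumes "interior_radius h e" "\<forall>a<m. \<bar>h' a - h a\<bar> < e / 2"
  shows "interior_radius h' (e / 2)"
  using assms unfolding interior_radius_def by (smt (verit, del_insts) field_sum_of_halves)

lemma weight_shift_signs:
  assumes "X \<subseteq> {..<m}"
  shows "weight (\<lambda>a. h a + (if a \<in> X then \<rho> else - \<rho>)) y
       = weight h y * ((\<Prod>a\<in>X. exp (\<rho> * t y a)) * (\<Prod>a\<in>{..<m} - X. exp (- \<rho> * t y a)))"
proof -
  have "tdot m t y (\<lambda>a. if a \<in> X then \<rho> else - \<rho>) = (\<Sum>a<m. if a \<in> X then \<rho> * t y a else - \<rho> * t y a)"
    unfolding tdot_def by (rule sum.cong) auto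
  moreover have "{..<m} \<inter> X = X" "{..<m} \<inter> - X = {..<m} - X" using assms by auto
  ultimately show ?thesis
    unfolding weight_add by (simp add: exp_sum if_distrib[of exp] prod.If_cases)
qed

lemma integrable_weight_exp_tnorm:
  assumes "interior_radius h e" "\<forall>a<m. \<bar>h' a - h a\<bar> \<le> r" "r + \<rho> < e" "\<rho> \<ge> 0"
  shows "integrable \<nu> (\<lambda>y. weight h' y * exp (\<rho> * tnorm y))"
proof -
  define shift where "shift X = (\<lambda>a. h' a + (if a \<in> X then \<rho> else - \<rho>))" for X
  have "shift X \<in> nat_param_space \<nu> m t" for X
    using assms(2-4) by (intro interior_radius_nps[OF assms(1)]) (auto simp: shift_def)
  then have int: "integrable \<nu> (\<lambda>y. \<Sum>X\<in>Pow {..<m}. weight (shift X) y)"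
    by (intro Bochner_Integration.integrable_sum integrable_weight)
  show ?thesis
  proof (rule Bochner_Integration.integrable_bound[OF int _ AE_I2])
    fix y
    have "weight h' y * exp (\<rho> * tnorm y)
        \<le> weight h' y * (\<Sum>X\<in>Pow {..<m}. (\<Prod>a\<in>X. exp (\<rho> * t y a)) * (\<Prod>a\<in>{..<m} - X. exp (- \<rho> * t y a)))"
      unfolding tnorm_def using exp_mult_sum_abs_le[OF _ assms(4)] weight_pos
      by (intro mult_left_mono) (auto simp: less_imp_le)
    also have "\<dots> = (\<Sum>X\<in>Pow {..<m}. weight (shift X) y)"
      unfolding sum_distrib_left shift_def by (intro sum.cong refl) (simp add: weight_shift_signs)
    finally show "norm (weight h' y * exp (\<rho> * tnorm y)) \<le> norm (\<Sum>X\<in>Pow {..<m}. weight (shift X) y)"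
      using weight_pos[of h' y] by simp
  qed measurable
qed

lemma integrable_weight_mult:
  assumes "interior_radius h e" "\<forall>a<m. \<bar>h' a - h a\<bar> \<le> r" "r + \<rho>' < e" "\<rho>' \<ge> 0"
    and f: "f \<in> borel_measurable \<nu>" "\<And>y. \<bar>f y\<bar> \<le> C * (1 + tnorm y) ^ k * exp (\<rho>' * tnorm y)"
  shows "integrable \<nu> (\<lambda>y. weight h' y * f y)"
proof -
  define \<rho> where "\<rho> = (e - r - \<rho>') / 2"
  have \<rho>: "\<rho> > 0" "r + (\<rho> + \<rho>') < e" using assms(3) unfolding \<rho>_def by (auto simp: field_simps)
  define c where "c = (real (Suc k) / \<rho>) ^ Suc k * exp \<rho>"
  have int: "integrable \<nu> (\<lambda>y. (C * c) * (weight h' y * exp ((\<rho> + \<rho>') * tnorm y)))"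
    using integrable_weight_exp_tnorm[OF assms(1,2) \<rho>(2)] \<rho>(1) assms(4) by simp
  show ?thesis
  proof (rule Bochner_Integration.integrable_bound[OF int _ AE_I2])
    fix y
    have pos: "0 < (1 + tnorm y) ^ k * exp (\<rho>' * tnorm y)" using tnorm_nonneg[of y] by simp
    have "0 \<le> C * ((1 + tnorm y) ^ k * exp (\<rho>' * tnorm y))"
      using f(2)[of y] by (simp add: mult.assoc)
    then have C: "0 \<le> C" using pos by (simp add: zero_le_mult_iff)
    have "\<bar>f y\<bar> \<le> C * (1 + tnorm y) ^ k * exp (\<rho>' * tnorm y)" by (rule f(2))
    also have "\<dots> \<le> C * (c * exp (\<rho> * tnorm y)) * exp (\<rho>' * tnorm y)"
      unfolding c_def using one_plus_power_le_exp[OF tnorm_nonneg[of y] \<rho>(1), of k] C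
      by (intro mult_right_mono mult_left_mono) (auto simp: mult.assoc)
    also have "\<dots> = C * c * exp ((\<rho> + \<rho>') * tnorm y)"
      by (simp add: distrib_right exp_add)
    finally have "weight h' y * \<bar>f y\<bar> \<le> weight h' y * (C * c * exp ((\<rho> + \<rho>') * tnorm y))"
      using weight_pos[of h' y] by (intro mult_left_mono) auto
    then show "norm (weight h' y * f y) \<le> norm (C * c * (weight h' y * exp ((\<rho> + \<rho>') * tnorm y)))"
      using weight_pos[of h' y] C \<rho>(1) by (simp add: abs_mult c_def mult_ac)
  qed (use f(1) in measurable)
qed

end

context exp_family
begin

definition Zt :: "nat \<Rightarrow> (nat \<Rightarrow> real) \<Rightarrow> real" where
  "Zt a h = (\<integral>y. weight h y * t y a \<partial>\<nu>)"

definition Ztt :: "nat \<Rightarrow> nat \<Rightarrow> (nat \<Rightarrow> real) \<Rightarrow> real" where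
  "Ztt a b h = (\<integral>y. weight h y * (t y a * t y b) \<partial>\<nu>)"

lemma weight_taylor_remainder_le:
  assumes w: "\<bar>w y\<bar> \<le> (1 + tnorm y) ^ p" and v: "\<forall>a<m. \<bar>v a\<bar> \<le> d"
  shows "\<bar>weight h y * (w y * (exp (tdot m t y v) - 1 - tdot m t y v))\<bar>
           \<le> (\<Sum>a<m. \<bar>v a\<bar>)\<^sup>2 * (weight h y * ((1 + tnorm y) ^ (p + 2) * exp (d * tnorm y)))"
proof -
  define s where "s = tdot m t y v"
  define V where "V = (\<Sum>a<m. \<bar>v a\<bar>)"
  have S: "0 \<le> tnorm y" "tnorm y ^ 2 \<le> (1 + tnorm y) ^ 2"
    using tnorm_nonneg[of y] by (auto intro: power_mono)
  have "\<bar>exp s - 1 - s\<bar> \<le> exp \<bar>s\<bar> * \<bar>s\<bar>\<^sup>2"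
    using abs_exp_minus_one_minus_le[of s] by simp
  also have "\<dots> \<le> exp (d * tnorm y) * (tnorm y * V)\<^sup>2"
    using abs_tdot_le_tnorm[OF v, of y] unfolding s_def V_def
    by (intro mult_mono power_mono) (auto simp: mult.commute)
  also have "\<dots> \<le> exp (d * tnorm y) * ((1 + tnorm y) ^ 2 * V\<^sup>2)"
    using S by (simp add: power_mult_distrib mult_right_mono)
  finally have "\<bar>w y\<bar> * \<bar>exp s - 1 - s\<bar> \<le> (1 + tnorm y) ^ p * (exp (d * tnorm y) * ((1 + tnorm y) ^ 2 * V\<^sup>2))"
    using w by (intro mult_mono) auto
  then have "weight h y * (\<bar>w y\<bar> * \<bar>exp s - 1 - s\<bar>)
      \<le> weight h y * ((1 + tnorm y) ^ p * (exp (d * tnorm y) * ((1 + tnorm y) ^ 2 * V\<^sup>2)))"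
    using weight_pos[of h y] by (intro mult_left_mono) auto
  also have "\<dots> = V\<^sup>2 * (weight h y * ((1 + tnorm y) ^ (p + 2) * exp (d * tnorm y)))"
    by (simp add: power_add power2_eq_square mult_ac)
  finally show ?thesis
    using weight_pos[of h y] unfolding s_def[symmetric] V_def[symmetric] by (simp add: abs_mult)
qed

lemma integral_weight_quadratic_approx:
  assumes h: "interior_radius h e" and w: "w \<in> borel_measurable \<nu>" "\<And>y. \<bar>w y\<bar> \<le> (1 + tnorm y) ^ p"
    and v: "\<forall>a<m. \<bar>v a\<bar> \<le> e / 4"
  shows "\<bar>(\<integral>y. weight (\<lambda>a. h a + v a) y * w y \<partial>\<nu>) - (\<integral>y. weight h y * w y \<partial>\<nu>)
           - (\<Sum>a<m. (\<integral>y. weight h y * (w y * t y a) \<partial>\<nu>) * v a)\<bar>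
         \<le> (\<integral>y. weight h y * ((1 + tnorm y) ^ (p + 2) * exp (e / 4 * tnorm y)) \<partial>\<nu>) * (\<Sum>a<m. \<bar>v a\<bar>)\<^sup>2"
proof -
  have e: "e > 0" by (rule interior_radius_pos[OF h])
  define G where "G y = (1 + tnorm y) ^ (p + 2) * exp (e / 4 * tnorm y)" for y
  define R where "R y = weight h y * (w y * (exp (tdot m t y v) - 1 - tdot m t y v))" for y
  have int_v: "integrable \<nu> (\<lambda>y. weight (\<lambda>a. h a + v a) y * w y)"
    by (rule integrable_weight_mult[OF h _ _ _ w(1), of _ "e/4" 0 1 p]) (use v e w(2) in auto)
  have int_0: "integrable \<nu> (\<lambda>y. weight h y * w y)"
    by (rule integrable_weight_mult[OF h _ _ _ w(1), of _ 0 0 1 p]) (use e w(2) in auto)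
  have int_t: "integrable \<nu> (\<lambda>y. weight h y * (w y * t y a) * v a)" if "a < m" for a
  proof (intro integrable_mult_left integrable_weight_mult[OF h _ _ _ _, of _ 0 0 _ 1 "Suc p"])
    show "\<bar>w y * t y a\<bar> \<le> 1 * (1 + tnorm y) ^ Suc p * exp (0 * tnorm y)" for y
    proof -
      have "\<bar>w y\<bar> * \<bar>t y a\<bar> \<le> (1 + tnorm y) ^ p * (1 + tnorm y)"
        using w(2)[of y] abs_t_le_one_plus_tnorm[OF that, of y] tnorm_nonneg[of y]
        by (intro mult_mono) auto
      then show ?thesis by (simp add: abs_mult mult.commute)
    qed
  qed (use e w(1) measurable_t[OF that] in auto)
  have int_G: "integrable \<nu> (\<lambda>y. weight h y * G y)"
    by (rule integrable_weight_mult[OF h _ _ _ _, of _ 0 "e/4" _ 1 "p+2"])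
       (use e tnorm_nonneg in \<open>auto simp: G_def\<close>)
  have R_eq: "R y = weight (\<lambda>a. h a + v a) y * w y - weight h y * w y
                    - (\<Sum>a<m. weight h y * (w y * t y a) * v a)" for y
  proof -
    have "(\<Sum>a<m. weight h y * (w y * t y a) * v a) = weight h y * w y * tdot m t y v"
      unfolding tdot_def sum_distrib_left by (intro sum.cong) auto
    then show ?thesis unfolding R_def weight_add by (simp add: algebra_simps)
  qed
  have int_sum: "integrable \<nu> (\<lambda>y. \<Sum>a<m. weight h y * (w y * t y a) * v a)"
    using int_t by auto
  have "(\<integral>y. (\<Sum>a<m. weight h y * (w y * t y a) * v a) \<partial>\<nu>)
        = (\<Sum>a<m. (\<integral>y. weight h y * (w y * t y a) \<partial>\<nu>) * v a)"
    using int_t by (subst Bochner_Integration.integral_sum) auto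
  then have R_integral: "(\<integral>y. weight (\<lambda>a. h a + v a) y * w y \<partial>\<nu>) - (\<integral>y. weight h y * w y \<partial>\<nu>)
           - (\<Sum>a<m. (\<integral>y. weight h y * (w y * t y a) \<partial>\<nu>) * v a) = integral\<^sup>L \<nu> R"
    unfolding R_eq using int_v int_0 int_sum by simp
  have "norm (integral\<^sup>L \<nu> R) \<le> (\<integral>y. (\<Sum>a<m. \<bar>v a\<bar>)\<^sup>2 * (weight h y * G y) \<partial>\<nu>)"
  proof (rule order_trans[OF Bochner_Integration.integral_norm_bound Bochner_Integration.integral_mono])
    show "integrable \<nu> (\<lambda>y. norm (R y))"
      unfolding R_eq using int_v int_0 int_sum by auto
    show "norm (R y) \<le> (\<Sum>a<m. \<bar>v a\<bar>)\<^sup>2 * (weight h y * G y)" for y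
      unfolding R_def G_def real_norm_def by (rule weight_taylor_remainder_le[OF w(2)]) (use v in auto)
  qed (use int_G in auto)
  then show ?thesis unfolding R_integral G_def by (simp add: mult.commute)
qed

lemma DERIV_Z_curve:
  assumes h: "interior_radius h e" and g0: "g s0 = h"
    and g: "\<And>a. a < m \<Longrightarrow> ((\<lambda>s. g s a) has_real_derivative g' a) (at s0)"
  shows "((\<lambda>s. Z (g s)) has_real_derivative (\<Sum>a<m. Zt a h * g' a)) (at s0)"
proof (rule DERIV_comp_quadratic_approx[where \<delta>="e/4", OF _ _ g0 g])
  fix v :: "nat \<Rightarrow> real" assume v: "\<forall>a<m. \<bar>v a\<bar> \<le> e / 4"
  show "\<bar>Z (\<lambda>a. h a + v a) - Z h - (\<Sum>a<m. Zt a h * v a)\<bar>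
    \<le> (\<integral>y. weight h y * ((1 + tnorm y) ^ (0 + 2) * exp (e / 4 * tnorm y)) \<partial>\<nu>) * (\<Sum>a<m. \<bar>v a\<bar>)\<^sup>2"
    using integral_weight_quadratic_approx[OF h _ _ v, of "\<lambda>_. 1" 0]
    unfolding Z_eq_integral Zt_def by simp
qed (use interior_radius_pos[OF h] in auto)

lemma DERIV_Zt_curve:
  assumes h: "interior_radius h e" and g0: "g s0 = h" and b: "b < m"
    and g: "\<And>a. a < m \<Longrightarrow> ((\<lambda>s. g s a) has_real_derivative g' a) (at s0)"
  shows "((\<lambda>s. Zt b (g s)) has_real_derivative (\<Sum>a<m. Ztt b a h * g' a)) (at s0)"
proof (rule DERIV_comp_quadratic_approx[where \<delta>="e/4", OF _ _ g0 g])
  fix v :: "nat \<Rightarrow> real" assume v: "\<forall>a<m. \<bar>v a\<bar> \<le> e / 4"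
  show "\<bar>Zt b (\<lambda>a. h a + v a) - Zt b h - (\<Sum>a<m. Ztt b a h * v a)\<bar>
    \<le> (\<integral>y. weight h y * ((1 + tnorm y) ^ (1 + 2) * exp (e / 4 * tnorm y)) \<partial>\<nu>) * (\<Sum>a<m. \<bar>v a\<bar>)\<^sup>2"
    unfolding Zt_def Ztt_def
    by (rule integral_weight_quadratic_approx[OF h measurable_t[OF b] _ v])
       (use abs_t_le_one_plus_tnorm[OF b] in auto)
qed (use interior_radius_pos[OF h] in auto)

end

context exp_family
begin

lemma measurable_expfam_dens [measurable]: "expfam_dens \<nu> m t h \<in> borel_measurable \<nu>"
  unfolding expfam_dens_def by measurable

lemma ln_expfam_dens: "ln (expfam_dens \<nu> m t h y) = tdot m t y h - ln (Z h)"
  unfolding expfam_dens_def log_partition_def Z_def by simp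

lemma expfam_dens_eq: "h \<in> nat_param_space \<nu> m t \<Longrightarrow> expfam_dens \<nu> m t h y = weight h y / Z h"
  using Z_pos[of h] unfolding expfam_dens_def log_partition_def weight_def Z_def by (simp add: exp_diff)

lemma integral_expfam:
  assumes "h \<in> nat_param_space \<nu> m t" "f \<in> borel_measurable \<nu>"
  shows "(\<integral>y. f y \<partial>Pr h) = (\<integral>y. weight h y * f y \<partial>\<nu>) / Z h"
proof -
  have "(\<integral>y. f y \<partial>Pr h) = (\<integral>y. expfam_dens \<nu> m t h y * f y \<partial>\<nu>)"
    unfolding expfam_def using assms(2) by (subst integral_density) (auto simp: expfam_dens_def)
  then show ?thesis using expfam_dens_eq[OF assms(1)] by simp
qed

lemma integrable_expfam_iff:
  assumes "h \<in> nat_param_space \<nu> m t" "f \<in> borel_measurable \<nu>"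
  shows "integrable (Pr h) f \<longleftrightarrow> integrable \<nu> (\<lambda>y. weight h y * f y)"
proof -
  have "integrable (Pr h) f \<longleftrightarrow> integrable \<nu> (\<lambda>y. expfam_dens \<nu> m t h y * f y)"
    unfolding expfam_def using assms(2)
    by (subst integrable_density) (auto simp: expfam_dens_def)
  also have "\<dots> \<longleftrightarrow> integrable \<nu> (\<lambda>y. inverse (Z h) * (weight h y * f y))"
    using expfam_dens_eq[OF assms(1)] by (simp add: divide_inverse mult_ac)
  finally show ?thesis using Z_pos[OF assms(1)] by simp
qed

lemma prob_space_expfam:
  assumes "h \<in> nat_param_space \<nu> m t"
  shows "prob_space (Pr h)"
proof (rule prob_spaceI)
  have "emeasure (Pr h) (space (Pr h)) = (\<integral>\<^sup>+ y. ennreal (weight h y / Z h) \<partial>\<nu>)"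
    unfolding expfam_def
    by (subst emeasure_density) (auto simp: nn_integral_set_ennreal expfam_dens_eq[OF assms])
  also have "\<dots> = ennreal (\<integral>y. weight h y / Z h \<partial>\<nu>)"
    using Z_pos[OF assms] integrable_weight[OF assms]
    by (intro nn_integral_eq_integral) (auto simp: less_imp_le[OF weight_pos])
  also have "\<dots> = 1" using Z_eq_integral Z_pos[OF assms] by simp
  finally show "emeasure (Pr h) (space (Pr h)) = 1" .
qed

lemma integrable_expfam_poly:
  assumes h: "interior_radius h e" and f: "f \<in> borel_measurable \<nu>" "\<And>y. \<bar>f y\<bar> \<le> C * (1 + tnorm y) ^ k"
  shows "integrable (Pr h) f"
  unfolding integrable_expfam_iff[OF interior_radius_center[OF h] f(1)]
  by (rule integrable_weight_mult[OF h _ _ _ f(1), of _ 0 0 C k])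
     (use interior_radius_pos[OF h] f(2) in auto)

lemma mean_stat_eq:
  assumes "h \<in> nat_param_space \<nu> m t" "a < m"
  shows "mean_stat \<nu> m t h a = Zt a h / Z h"
  unfolding mean_stat_def Zt_def by (rule integral_expfam[OF assms(1) measurable_t[OF assms(2)]])

lemma fisher_h_eq:
  assumes h: "interior_radius h e" and ab: "a < m" "b < m"
  shows "fisher_h \<nu> m t h a b = Ztt a b h / Z h - mean_stat \<nu> m t h a * mean_stat \<nu> m t h b"
proof -
  have nps: "h \<in> nat_param_space \<nu> m t" by (rule interior_radius_center[OF h])
  interpret prob_space "Pr h" by (rule prob_space_expfam[OF nps])
  have int_t: "integrable (Pr h) (\<lambda>y. t y c)" if "c < m" for c
    by (rule integrable_expfam_poly[OF h measurable_t[OF that], of 1 1])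
       (use abs_t_le_one_plus_tnorm[OF that] in auto)
  have "\<bar>t y a * t y b\<bar> \<le> 1 * (1 + tnorm y) ^ 2" for y
    using abs_t_le_one_plus_tnorm[OF ab(1), of y] abs_t_le_one_plus_tnorm[OF ab(2), of y]
    by (simp add: abs_mult power2_eq_square mult_mono')
  then have int_tt: "integrable (Pr h) (\<lambda>y. t y a * t y b)"
    using measurable_t[OF ab(1)] measurable_t[OF ab(2)]
    by (intro integrable_expfam_poly[OF h, of _ 1 2]) auto
  have "(\<integral>y. t y a * t y b \<partial>Pr h) = Ztt a b h / Z h"
    unfolding Ztt_def using measurable_t[OF ab(1)] measurable_t[OF ab(2)]
    by (intro integral_expfam[OF nps]) auto
  then show ?thesis
    unfolding fisher_h_def mean_stat_def
    using int_t[OF ab(1)] int_t[OF ab(2)] int_tt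
    by (simp add: algebra_simps prob_space)
qed

lemma DERIV_ln_expfam_dens_curve:
  assumes h: "interior_radius h e" and g0: "g s0 = h"
    and g: "\<And>a. a < m \<Longrightarrow> ((\<lambda>s. g s a) has_real_derivative g' a) (at s0)"
  shows "((\<lambda>s. ln (expfam_dens \<nu> m t (g s) y)) has_real_derivative
          (\<Sum>a<m. (t y a - mean_stat \<nu> m t h a) * g' a)) (at s0)"
proof -
  have nps: "h \<in> nat_param_space \<nu> m t" by (rule interior_radius_center[OF h])
  have "((\<lambda>s. ln (Z (g s))) has_real_derivative inverse (Z (g s0)) * (\<Sum>a<m. Zt a h * g' a)) (at s0)"
    by (rule DERIV_chain2[OF DERIV_ln DERIV_Z_curve[OF h g0 g]]) (use Z_pos[OF nps] g0 in simp)
  then have "((\<lambda>s. ln (Z (g s))) has_real_derivative inverse (Z h) * (\<Sum>a<m. Zt a h * g' a)) (at s0)"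
    using g0 by simp
  then have "((\<lambda>s. tdot m t y (g s) - ln (Z (g s))) has_real_derivative
      (\<Sum>a<m. t y a * g' a) - inverse (Z h) * (\<Sum>a<m. Zt a h * g' a)) (at s0)"
    unfolding tdot_def by (intro DERIV_diff DERIV_sum DERIV_cmult g) auto
  moreover have "(\<Sum>a<m. t y a * g' a) - inverse (Z h) * (\<Sum>a<m. Zt a h * g' a)
       = (\<Sum>a<m. (t y a - mean_stat \<nu> m t h a) * g' a)"
    by (simp add: mean_stat_eq[OF nps] sum_distrib_left sum_subtractf[symmetric]
        algebra_simps divide_inverse)
  ultimately show ?thesis unfolding ln_expfam_dens by simp
qed

lemma eventually_curve_near:
  assumes g0: "g s0 = h" and r: "r > 0"
    and g: "\<And>a. a < m \<Longrightarrow> ((\<lambda>s. g s a) has_real_derivative g' a) (at s0)"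
  shows "\<forall>\<^sub>F s in nhds s0. \<forall>a<m. \<bar>g s a - h a\<bar> < r"
proof -
  have "\<forall>\<^sub>F s in nhds s0. \<forall>a\<in>{..<m}. \<bar>g s a - h a\<bar> < r"
  proof (intro eventually_ball_finite ballI)
    fix a assume "a \<in> {..<m}"
    then have "isCont (\<lambda>s. g s a) s0" using g DERIV_isCont by auto
    then have "((\<lambda>s. g s a) \<longlongrightarrow> g s0 a) (nhds s0)"
      unfolding isCont_def by (rule iffD1[OF tendsto_at_iff_tendsto_nhds])
    then have "((\<lambda>s. g s a) \<longlongrightarrow> h a) (nhds s0)" using g0 by simp
    from tendstoD[OF this r] show "\<forall>\<^sub>F s in nhds s0. \<bar>g s a - h a\<bar> < r"
      by eventually_elim (simp add: dist_real_def)
  qed auto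
  then show ?thesis by (simp add: Ball_def)
qed

lemma DERIV_mean_stat_curve:
  assumes h: "interior_radius h e" and g0: "g s0 = h" and b: "b < m"
    and g: "\<And>a. a < m \<Longrightarrow> ((\<lambda>s. g s a) has_real_derivative g' a) (at s0)"
  shows "((\<lambda>s. mean_stat \<nu> m t (g s) b) has_real_derivative
          (\<Sum>a<m. fisher_h \<nu> m t h b a * g' a)) (at s0)"
proof -
  have nps: "h \<in> nat_param_space \<nu> m t" by (rule interior_radius_center[OF h])
  have Z: "Z h > 0" by (rule Z_pos[OF nps])
  have "\<forall>\<^sub>F s in nhds s0. \<forall>a<m. \<bar>g s a - h a\<bar> < e"
    by (rule eventually_curve_near[where g=g and g'=g', OF g0 interior_radius_pos[OF h] g])
  then have "\<forall>\<^sub>F s in nhds s0. mean_stat \<nu> m t (g s) b = Zt b (g s) / Z (g s)"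
  proof eventually_elim
    case (elim s)
    show ?case by (rule mean_stat_eq[OF interior_radius_nps[OF h elim] b])
  qed
  moreover have "((\<lambda>s. Zt b (g s) / Z (g s)) has_real_derivative
     ((\<Sum>a<m. Ztt b a h * g' a) * Z h - Zt b h * (\<Sum>a<m. Zt a h * g' a)) / (Z h * Z h)) (at s0)"
    using DERIV_divide[OF DERIV_Zt_curve[OF h g0 b g] DERIV_Z_curve[OF h g0 g]] Z g0 by simp
  moreover have "((\<Sum>a<m. Ztt b a h * g' a) * Z h - Zt b h * (\<Sum>a<m. Zt a h * g' a)) / (Z h * Z h)
     = (\<Sum>a<m. fisher_h \<nu> m t h b a * g' a)"
  proof -
    have "(\<Sum>a<m. fisher_h \<nu> m t h b a * g' a)
       = (\<Sum>a<m. (Ztt b a h * g' a) / Z h - (Zt b h / Z h) * ((Zt a h * g' a) / Z h))"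
      by (rule sum.cong) (auto simp: fisher_h_eq[OF h b] mean_stat_eq[OF nps] b left_diff_distrib)
    also have "\<dots> = ((\<Sum>a<m. Ztt b a h * g' a) * Z h - Zt b h * (\<Sum>a<m. Zt a h * g' a)) / (Z h * Z h)"
      using Z by (simp add: sum_subtractf sum_divide_distrib[symmetric] sum_distrib_left field_simps)
    finally show ?thesis ..
  qed
  ultimately show ?thesis by (simp add: DERIV_cong_ev)
qed

end

section \<open>Covariance of sample means\<close>

lemma
  fixes \<phi> :: "'a \<Rightarrow> real" and I :: "'i set"
  assumes M: "prob_space M" and I: "finite I" "i \<in> I" and \<phi>: "integrable M \<phi>"
  shows integrable_PiM_coordinate: "integrable (PiM I (\<lambda>_. M)) (\<lambda>\<omega>. \<phi> (\<omega> i))"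
    and integral_PiM_coordinate: "(\<integral>\<omega>. \<phi> (\<omega> i) \<partial>PiM I (\<lambda>_. M)) = (\<integral>y. \<phi> y \<partial>M)"
proof -
  interpret M: prob_space M by (rule M)
  interpret product_prob_space "\<lambda>_::'i. M" by (rule product_prob_spaceI) (rule M)
  have one: "(\<integral>y. 1 \<partial>M) = (1::real)" by (simp add: M.prob_space)
  define F where "F k = (if k = i then \<phi> else (\<lambda>_. 1))" for k
  have "integrable M (F k)" for k using \<phi> by (simp add: F_def)
  moreover have "(\<Prod>k\<in>I. F k (\<omega> k)) = \<phi> (\<omega> i)" for \<omega>
    using I unfolding F_def by (simp add: if_distrib[of "\<lambda>f. f (\<omega> _)"] prod.delta)
  moreover have "(\<Prod>k\<in>I. integral\<^sup>L M (F k)) = (\<Prod>k\<in>I. if k = i then (\<integral>y. \<phi> y \<partial>M) else 1)"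
    unfolding F_def using one by (intro prod.cong) auto
  moreover have "\<dots> = (\<integral>y. \<phi> y \<partial>M)" using I by (simp add: prod.delta)
  ultimately show "integrable (PiM I (\<lambda>_. M)) (\<lambda>\<omega>. \<phi> (\<omega> i))"
    and "(\<integral>\<omega>. \<phi> (\<omega> i) \<partial>PiM I (\<lambda>_. M)) = (\<integral>y. \<phi> y \<partial>M)"
    using product_integrable_prod[OF I(1), of F] product_integral_prod[OF I(1), of F] by auto
qed

lemma
  fixes \<phi> \<psi> :: "'a \<Rightarrow> real" and I :: "'i set"
  assumes M: "prob_space M" and I: "finite I" "i \<in> I" "j \<in> I" "i \<noteq> j"
    and \<phi>: "integrable M \<phi>" and \<psi>: "integrable M \<psi>"
  shows integrable_PiM_two_coordinates:
      "integrable (PiM I (\<lambda>_. M)) (\<lambda>\<omega>. \<phi> (\<omega> i) * \<psi> (\<omega> j))"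
    and integral_PiM_two_coordinates:
      "(\<integral>\<omega>. \<phi> (\<omega> i) * \<psi> (\<omega> j) \<partial>PiM I (\<lambda>_. M)) = (\<integral>y. \<phi> y \<partial>M) * (\<integral>y. \<psi> y \<partial>M)"
proof -
  interpret M: prob_space M by (rule M)
  interpret product_prob_space "\<lambda>_::'i. M" by (rule product_prob_spaceI) (rule M)
  define F where "F k = (if k = i then \<phi> else if k = j then \<psi> else (\<lambda>_. 1))" for k
  have "integrable M (F k)" for k using \<phi> \<psi> by (simp add: F_def)
  moreover have "(\<Prod>k\<in>I. F k (\<omega> k)) = \<phi> (\<omega> i) * \<psi> (\<omega> j)" for \<omega>
  proof -
    have "(\<Prod>k\<in>I. F k (\<omega> k)) = (\<Prod>k\<in>I. (if k = i then \<phi> (\<omega> k) else 1) * (if k = j then \<psi> (\<omega> k) else 1))"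
      using I(4) unfolding F_def by (intro prod.cong) auto
    then show ?thesis using I by (simp add: prod.distrib prod.delta)
  qed
  moreover have "(\<Prod>k\<in>I. integral\<^sup>L M (F k)) = (\<integral>y. \<phi> y \<partial>M) * (\<integral>y. \<psi> y \<partial>M)"
  proof -
    have "(\<Prod>k\<in>I. integral\<^sup>L M (F k)) = (\<Prod>k\<in>I. (if k = i then (\<integral>y. \<phi> y \<partial>M) else 1)
                                             * (if k = j then (\<integral>y. \<psi> y \<partial>M) else 1))"
      using I(4) unfolding F_def by (intro prod.cong) (auto simp: M.prob_space)
    then show ?thesis using I by (simp add: prod.distrib prod.delta)
  qed
  ultimately show "integrable (PiM I (\<lambda>_. M)) (\<lambda>\<omega>. \<phi> (\<omega> i) * \<psi> (\<omega> j))"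
    and "(\<integral>\<omega>. \<phi> (\<omega> i) * \<psi> (\<omega> j) \<partial>PiM I (\<lambda>_. M)) = (\<integral>y. \<phi> y \<partial>M) * (\<integral>y. \<psi> y \<partial>M)"
    using product_integrable_prod[OF I(1), of F] product_integral_prod[OF I(1), of F] by auto
qed

lemma cov_expand:
  assumes M: "prob_space M" and f: "integrable M f" and g: "integrable M g"
    and fg: "integrable M (\<lambda>y. f y * g y)"
  shows "cov M f g = (\<integral>y. f y * g y \<partial>M) - (\<integral>y. f y \<partial>M) * (\<integral>y. g y \<partial>M)"
proof -
  interpret prob_space M by (rule M)
  show ?thesis
    unfolding cov_def using f g fg by (simp add: algebra_simps prob_space)
qed

lemma cov_add_const:
  assumes M: "prob_space M" and f: "integrable M f"
  shows "cov M (\<lambda>y. c + f y) g = cov M f g" and "cov M g (\<lambda>y. c + f y) = cov M g f"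
proof -
  interpret prob_space M by (rule M)
  have "(\<integral>y. c + f y \<partial>M) = c + (\<integral>y. f y \<partial>M)" using f by (simp add: prob_space)
  then show "cov M (\<lambda>y. c + f y) g = cov M f g" "cov M g (\<lambda>y. c + f y) = cov M g f"
    unfolding cov_def by simp_all
qed

lemma cov_sum_sum:
  fixes X :: "'p \<Rightarrow> 'a \<Rightarrow> real" and Y :: "'q \<Rightarrow> 'a \<Rightarrow> real"
  assumes M: "prob_space M" and fin: "finite P" "finite Q"
    and X: "\<And>p. p \<in> P \<Longrightarrow> integrable M (X p)" and Y: "\<And>q. q \<in> Q \<Longrightarrow> integrable M (Y q)"
    and XY: "\<And>p q. p \<in> P \<Longrightarrow> q \<in> Q \<Longrightarrow> integrable M (\<lambda>y. X p y * Y q y)"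
  shows "cov M (\<lambda>y. \<Sum>p\<in>P. \<alpha> p * X p y) (\<lambda>y. \<Sum>q\<in>Q. \<beta> q * Y q y)
       = (\<Sum>p\<in>P. \<Sum>q\<in>Q. \<alpha> p * \<beta> q * ((\<integral>y. X p y * Y q y \<partial>M) - (\<integral>y. X p y \<partial>M) * (\<integral>y. Y q y \<partial>M)))"
proof -
  have prod: "(\<Sum>p\<in>P. \<alpha> p * X p y) * (\<Sum>q\<in>Q. \<beta> q * Y q y)
      = (\<Sum>p\<in>P. \<Sum>q\<in>Q. (\<alpha> p * \<beta> q) * (X p y * Y q y))" for y
    by (simp add: sum_product mult_ac)
  have "cov M (\<lambda>y. \<Sum>p\<in>P. \<alpha> p * X p y) (\<lambda>y. \<Sum>q\<in>Q. \<beta> q * Y q y)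
      = (\<Sum>p\<in>P. \<Sum>q\<in>Q. (\<alpha> p * \<beta> q) * (\<integral>y. X p y * Y q y \<partial>M))
        - (\<Sum>p\<in>P. \<alpha> p * (\<integral>y. X p y \<partial>M)) * (\<Sum>q\<in>Q. \<beta> q * (\<integral>y. Y q y \<partial>M))"
    using X Y XY
    by (subst cov_expand[OF M]) (auto simp: prod Bochner_Integration.integral_sum)
  then show ?thesis
    by (simp add: sum_product right_diff_distrib sum_subtractf mult_ac)
qed

lemma cov_sample_mean:
  fixes f g :: "'a \<Rightarrow> real"
  assumes M: "prob_space M" and N: "N \<ge> 1"
    and f: "integrable M f" and g: "integrable M g" and fg: "integrable M (\<lambda>y. f y * g y)"
  shows "cov (PiM {..<N} (\<lambda>_. M)) (\<lambda>\<omega>. 1 / real N * (\<Sum>i<N. f (\<omega> i)))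
                                      (\<lambda>\<omega>. 1 / real N * (\<Sum>i<N. g (\<omega> i)))
        = 1 / real N * cov M f g"
proof -
  define \<Omega> where "\<Omega> = PiM {..<N} (\<lambda>_. M)"
  have \<Omega>: "prob_space \<Omega>" unfolding \<Omega>_def by (intro prob_space_PiM M)
  have int_coord: "integrable \<Omega> (\<lambda>\<omega>. \<phi> (\<omega> i))" and integral_coord: "(\<integral>\<omega>. \<phi> (\<omega> i) \<partial>\<Omega>) = (\<integral>y. \<phi> y \<partial>M)"
    if "i < N" "integrable M \<phi>" for i and \<phi> :: "'a \<Rightarrow> real"
    unfolding \<Omega>_def using that(1)
    by (intro integrable_PiM_coordinate[OF M _ _ that(2)] integral_PiM_coordinate[OF M _ _ that(2)]; simp)+
  have int_pair: "integrable \<Omega> (\<lambda>\<omega>. f (\<omega> i) * g (\<omega> j))" if "i < N" "j < N" for i j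
  proof (cases "i = j")
    case True
    then show ?thesis using int_coord[OF that(1) fg] by simp
  next
    case False
    then show ?thesis unfolding \<Omega>_def using that by (intro integrable_PiM_two_coordinates[OF M _ _ _ _ f g]) auto
  qed
  have cov_pair: "(\<integral>\<omega>. f (\<omega> i) * g (\<omega> j) \<partial>\<Omega>) - (\<integral>\<omega>. f (\<omega> i) \<partial>\<Omega>) * (\<integral>\<omega>. g (\<omega> j) \<partial>\<Omega>)
      = (if i = j then cov M f g else 0)" if "i < N" "j < N" for i j
  proof (cases "i = j")
    case True
    then show ?thesis
      using integral_coord[OF that(1) fg] integral_coord[OF that(1) f] integral_coord[OF that(1) g]
      by (simp add: cov_expand[OF M f g fg])
  next
    case False
    then show ?thesis
      using integral_coord[OF that(1) f] integral_coord[OF that(2) g] that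
      unfolding \<Omega>_def by (simp add: integral_PiM_two_coordinates[OF M _ _ _ _ f g])
  qed
  have "cov \<Omega> (\<lambda>\<omega>. \<Sum>i<N. 1 / real N * f (\<omega> i)) (\<lambda>\<omega>. \<Sum>j<N. 1 / real N * g (\<omega> j))
      = (\<Sum>i<N. \<Sum>j<N. 1 / real N * (1 / real N) * (if i = j then cov M f g else 0))"
    by (subst cov_sum_sum[OF \<Omega>]) (auto simp: int_coord f g int_pair cov_pair)
  also have "\<dots> = 1 / real N * cov M f g"
    using N by (simp add: sum_divide_distrib[symmetric])
  finally show ?thesis unfolding \<Omega>_def by (simp add: sum_distrib_left)
qed

section \<open>Score and Hessian of the network likelihood\<close>

locale net_exp_family = exp_family \<nu> m t for \<nu> :: "'y measure" and m t +
  fixes \<sigma> :: "real \<Rightarrow> real" and L :: nat and n :: "nat \<Rightarrow> nat" and x :: "nat \<Rightarrow> real"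
  assumes differentiable_\<sigma>: "\<forall>z. \<sigma> differentiable (at z)" and output_dim: "n L = m"
begin

abbreviation out :: "param \<Rightarrow> nat \<Rightarrow> real" where
  "out \<theta> \<equiv> net_out \<sigma> L n x \<theta>"

definition jac :: "param \<Rightarrow> nat \<Rightarrow> nat \<times> nat \<times> nat \<Rightarrow> real" where
  "jac \<theta> a j = partial_deriv (\<lambda>\<theta>'. out \<theta>' a) \<theta> j"

definition hess :: "param \<Rightarrow> nat \<Rightarrow> nat \<times> nat \<times> nat \<Rightarrow> nat \<times> nat \<times> nat \<Rightarrow> real" where
  "hess \<theta> a j k = partial_deriv (\<lambda>\<theta>'. jac \<theta>' a k) \<theta> j"

lemma loglik_eq: "loglik \<sigma> L n x \<nu> t y \<theta> = ln (expfam_dens \<nu> m t (out \<theta>) y)"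
  unfolding loglik_def output_dim ..

lemma has_real_derivative_out_line:
  "((\<lambda>s. out (\<theta>(j := s)) a) has_real_derivative jac \<theta> a j) (at (\<theta> j))"
  unfolding jac_def by (rule has_real_derivative_partial_deriv[OF partially_differentiable_net_out[OF differentiable_\<sigma>]])

lemma has_real_derivative_jac_line:
  assumes "C2_fun \<sigma>"
  shows "((\<lambda>s. jac (\<theta>(j := s)) a k) has_real_derivative hess \<theta> a j k) (at (\<theta> j))"
proof -
  have "partially_differentiable (\<lambda>\<theta>'. jac \<theta>' a k)"
    using twice_partially_differentiable_net_out[OF assms, of L n x a]
    unfolding twice_partially_differentiable_def jac_def by blast
  then show ?thesis unfolding hess_def by (rule has_real_derivative_partial_deriv)
qed

lemma partial_deriv_loglik:
  assumes "interior_radius (out \<theta>) e"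
  shows "partial_deriv (loglik \<sigma> L n x \<nu> t y) \<theta> j = (\<Sum>a<m. (t y a - mean_stat \<nu> m t (out \<theta>) a) * jac \<theta> a j)"
  unfolding loglik_eq
  by (rule partial_deriv_eqI, rule DERIV_ln_expfam_dens_curve[where g="\<lambda>s. out (\<theta>(j := s))", OF assms])
     (auto intro: has_real_derivative_out_line)

lemma eventually_partial_deriv_loglik_line:
  assumes "interior_radius (out \<theta>) e"
  shows "\<forall>\<^sub>F s in nhds (\<theta> j). partial_deriv (loglik \<sigma> L n x \<nu> t y) (\<theta>(j := s)) k
           = (\<Sum>a<m. (t y a - mean_stat \<nu> m t (out (\<theta>(j := s))) a) * jac (\<theta>(j := s)) a k)"
proof -
  have "\<forall>\<^sub>F s in nhds (\<theta> j). \<forall>a<m. \<bar>out (\<theta>(j := s)) a - out \<theta> a\<bar> < e / 2"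
    using interior_radius_pos[OF assms]
    by (intro eventually_curve_near[where g'="\<lambda>a. jac \<theta> a j"] has_real_derivative_out_line) auto
  then show ?thesis
  proof eventually_elim
    case (elim s)
    show ?case by (rule partial_deriv_loglik[OF interior_radius_half[OF assms elim]])
  qed
qed

lemma partial_deriv2_loglik:
  assumes C2: "C2_fun \<sigma>" and h: "interior_radius (out \<theta>) e"
  shows "- partial_deriv (\<lambda>\<theta>'. partial_deriv (loglik \<sigma> L n x \<nu> t y) \<theta>' k) \<theta> j
    = (\<Sum>a<m. (\<Sum>b<m. fisher_h \<nu> m t (out \<theta>) a b * jac \<theta> b j) * jac \<theta> a k)
      - (\<Sum>a<m. (t y a - mean_stat \<nu> m t (out \<theta>) a) * hess \<theta> a j k)"
proof -
  have mean: "((\<lambda>s. mean_stat \<nu> m t (out (\<theta>(j := s))) a) has_real_derivative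
      (\<Sum>b<m. fisher_h \<nu> m t (out \<theta>) a b * jac \<theta> b j)) (at (\<theta> j))" if "a < m" for a
    by (rule DERIV_mean_stat_curve[OF h _ that has_real_derivative_out_line]) simp
  have summand: "((\<lambda>s. (t y a - mean_stat \<nu> m t (out (\<theta>(j := s))) a) * jac (\<theta>(j := s)) a k)
        has_real_derivative (0 - (\<Sum>b<m. fisher_h \<nu> m t (out \<theta>) a b * jac \<theta> b j)) * jac \<theta> a k
                  + (t y a - mean_stat \<nu> m t (out \<theta>) a) * hess \<theta> a j k) (at (\<theta> j))" if "a < m" for a
    using DERIV_mult[OF DERIV_diff[OF DERIV_const[of "t y a"] mean[OF that]]
        has_real_derivative_jac_line[OF C2, of \<theta> j a k]]
    by (simp add: mult.commute)
  have "((\<lambda>s. \<Sum>a<m. (t y a - mean_stat \<nu> m t (out (\<theta>(j := s))) a) * jac (\<theta>(j := s)) a k)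
        has_real_derivative
          (\<Sum>a<m. (0 - (\<Sum>b<m. fisher_h \<nu> m t (out \<theta>) a b * jac \<theta> b j)) * jac \<theta> a k
                  + (t y a - mean_stat \<nu> m t (out \<theta>) a) * hess \<theta> a j k)) (at (\<theta> j))"
    by (intro DERIV_sum summand) simp
  then have "partial_deriv (\<lambda>\<theta>'. partial_deriv (loglik \<sigma> L n x \<nu> t y) \<theta>' k) \<theta> j
      = (\<Sum>a<m. (0 - (\<Sum>b<m. fisher_h \<nu> m t (out \<theta>) a b * jac \<theta> b j)) * jac \<theta> a k
                  + (t y a - mean_stat \<nu> m t (out \<theta>) a) * hess \<theta> a j k)"
    by (intro partial_deriv_eqI) (simp add: DERIV_cong_ev[OF refl eventually_partial_deriv_loglik_line[OF h] refl])
  then show ?thesis by (simp add: sum_subtractf)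
qed

end

section \<open>Covariance of the estimators\<close>

lemma abs_double_sum_le:
  fixes \<alpha> :: "'p \<Rightarrow> real" and \<beta> :: "'q \<Rightarrow> real"
  assumes "\<forall>p\<in>P. \<bar>\<alpha> p\<bar> \<le> A" "\<forall>q\<in>Q. \<bar>\<beta> q\<bar> \<le> B" "0 \<le> A" "0 \<le> B"
  shows "\<bar>\<Sum>p\<in>P. \<Sum>q\<in>Q. \<alpha> p * \<beta> q * R p q\<bar> \<le> A * B * (\<Sum>p\<in>P. \<Sum>q\<in>Q. \<bar>R p q\<bar>)"
proof -
  have "\<bar>\<Sum>p\<in>P. \<Sum>q\<in>Q. \<alpha> p * \<beta> q * R p q\<bar> \<le> (\<Sum>p\<in>P. \<Sum>q\<in>Q. \<bar>\<alpha> p * \<beta> q * R p q\<bar>)"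
    by (rule order_trans[OF sum_abs sum_mono[OF sum_abs]])
  also have "\<dots> \<le> (\<Sum>p\<in>P. \<Sum>q\<in>Q. A * B * \<bar>R p q\<bar>)"
    unfolding abs_mult using assms by (intro sum_mono mult_right_mono mult_mono) auto
  finally show ?thesis by (simp add: sum_distrib_left)
qed

lemma abs_le_norm_inf: "finite S \<Longrightarrow> i \<in> S \<Longrightarrow> \<bar>T i\<bar> \<le> norm_inf T S"
  unfolding norm_inf_def by (rule Max_ge) auto

lemma norm_inf_le: "finite S \<Longrightarrow> S \<noteq> {} \<Longrightarrow> (\<And>i. i \<in> S \<Longrightarrow> \<bar>T i\<bar> \<le> B) \<Longrightarrow> norm_inf T S \<le> B"
  unfolding norm_inf_def by (subst Max_le_iff) auto

context exp_family
begin

lemma abs_mult_le_poly: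
  assumes "\<bar>u\<bar> \<le> A * (1 + tnorm y) ^ k" "\<bar>v\<bar> \<le> B * (1 + tnorm y) ^ l"
  shows "\<bar>u * v\<bar> \<le> (A * B) * (1 + tnorm y) ^ (k + l)"
proof -
  have "\<bar>u * v\<bar> \<le> (A * (1 + tnorm y) ^ k) * (B * (1 + tnorm y) ^ l)"
    unfolding abs_mult using assms by (intro mult_mono) auto
  then show ?thesis by (simp add: power_add mult_ac)
qed

lemma abs_sum_mult_le_poly:
  assumes "\<And>a. a < m \<Longrightarrow> \<bar>X a y\<bar> \<le> A * (1 + tnorm y) ^ k"
  shows "\<bar>\<Sum>a<m. X a y * c a\<bar> \<le> ((\<Sum>a<m. \<bar>c a\<bar>) * A) * (1 + tnorm y) ^ k"
proof -
  have "\<bar>\<Sum>a<m. X a y * c a\<bar> \<le> (\<Sum>a<m. (A * (1 + tnorm y) ^ k) * \<bar>c a\<bar>)"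
    using assms by (intro order_trans[OF sum_abs] sum_mono) (auto simp: abs_mult mult_right_mono)
  then show ?thesis by (simp add: sum_distrib_left sum_distrib_right mult_ac)
qed

end

locale net_exp_family_at = net_exp_family \<nu> m t \<sigma> L n x for \<nu> :: "'y measure" and m t \<sigma> L n x +
  fixes \<theta> :: param and e :: real
  assumes interior: "interior_radius (out \<theta>) e"
begin

abbreviation P :: "'y measure" where
  "P \<equiv> Pr (out \<theta>)"

abbreviation \<eta> :: "nat \<Rightarrow> real" where
  "\<eta> \<equiv> mean_stat \<nu> m t (out \<theta>)"

abbreviation I :: "nat \<Rightarrow> nat \<Rightarrow> real" where
  "I \<equiv> fisher_h \<nu> m t (out \<theta>)"

definition centered :: "nat \<Rightarrow> 'y \<Rightarrow> real" where
  "centered a y = t y a - \<eta> a"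

definition score :: "nat \<times> nat \<times> nat \<Rightarrow> 'y \<Rightarrow> real" where
  "score j y = (\<Sum>a<m. centered a y * jac \<theta> a j)"

definition neg_hessian :: "nat \<times> nat \<times> nat \<Rightarrow> nat \<times> nat \<times> nat \<Rightarrow> 'y \<Rightarrow> real" where
  "neg_hessian j k y = (\<Sum>a<m. (\<Sum>b<m. I a b * jac \<theta> b j) * jac \<theta> a k)
                       + (\<Sum>a<m. (- hess \<theta> a j k) * centered a y)"

lemma prob_space_P: "prob_space P"
  by (rule prob_space_expfam[OF interior_radius_center[OF interior]])

definition centered_const :: real where
  "centered_const = 1 + (\<Sum>a<m. \<bar>\<eta> a\<bar>)"

lemma integrable_P_poly:
  "f \<in> borel_measurable \<nu> \<Longrightarrow> (\<And>y. \<bar>f y\<bar> \<le> C * (1 + tnorm y) ^ k) \<Longrightarrow> integrable P f"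
  by (rule integrable_expfam_poly[OF interior])

lemma measurable_centered [measurable]: "a < m \<Longrightarrow> centered a \<in> borel_measurable \<nu>"
  unfolding centered_def using measurable_t by measurable

lemma abs_centered_le: "a < m \<Longrightarrow> \<bar>centered a y\<bar> \<le> centered_const * (1 + tnorm y) ^ 1"
proof -
  assume a: "a < m"
  have "\<bar>\<eta> a\<bar> \<le> (\<Sum>a<m. \<bar>\<eta> a\<bar>)" using a by (intro member_le_sum) auto
  moreover have "(\<Sum>a<m. \<bar>\<eta> a\<bar>) \<le> (\<Sum>a<m. \<bar>\<eta> a\<bar>) * (1 + tnorm y)"
    using tnorm_nonneg[of y] mult_left_mono[of 1 "1 + tnorm y" "\<Sum>a<m. \<bar>\<eta> a\<bar>"]
    by (simp add: sum_nonneg)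
  ultimately show ?thesis
    using abs_t_le_one_plus_tnorm[OF a, of y] unfolding centered_def centered_const_def
    by (simp add: algebra_simps)
qed

lemma integrable_centered: "a < m \<Longrightarrow> integrable P (centered a)"
  by (rule integrable_P_poly[OF measurable_centered abs_centered_le])

lemma integral_centered: "a < m \<Longrightarrow> (\<integral>y. centered a y \<partial>P) = 0"
proof -
  assume a: "a < m"
  interpret prob_space P by (rule prob_space_P)
  have "integrable P (\<lambda>y. t y a)"
    by (rule integrable_P_poly[OF measurable_t[OF a], of 1 1]) (use abs_t_le_one_plus_tnorm[OF a] in auto)
  then show ?thesis unfolding centered_def mean_stat_def by (simp add: prob_space)
qed

lemma measurable_score [measurable]: "score j \<in> borel_measurable \<nu>"
  unfolding score_def by measurable

lemma abs_score_le:
  "\<bar>score j y\<bar> \<le> ((\<Sum>a<m. \<bar>jac \<theta> a j\<bar>) * centered_const) * (1 + tnorm y) ^ 1"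
  unfolding score_def by (intro abs_sum_mult_le_poly abs_centered_le)

lemma measurable_neg_hessian [measurable]: "neg_hessian j k \<in> borel_measurable \<nu>"
  unfolding neg_hessian_def by measurable

lemma abs_neg_hessian_le:
  "\<bar>neg_hessian j k y\<bar> \<le> (\<bar>(\<Sum>a<m. (\<Sum>b<m. I a b * jac \<theta> b j) * jac \<theta> a k)\<bar>
                               + (\<Sum>a<m. \<bar>- hess \<theta> a j k\<bar>) * centered_const) * (1 + tnorm y) ^ 1"
proof -
  let ?c = "(\<Sum>a<m. (\<Sum>b<m. I a b * jac \<theta> b j) * jac \<theta> a k)"
  have "\<bar>?c\<bar> \<le> \<bar>?c\<bar> * (1 + tnorm y)" using tnorm_nonneg[of y] by (simp add: mult_le_cancel_left1)
  moreover have "\<bar>\<Sum>a<m. (- hess \<theta> a j k) * centered a y\<bar>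
      \<le> ((\<Sum>a<m. \<bar>- hess \<theta> a j k\<bar>) * centered_const) * (1 + tnorm y) ^ 1"
    using abs_sum_mult_le_poly[where X=centered and c="\<lambda>a. - hess \<theta> a j k" and y=y, OF abs_centered_le]
    by (simp add: mult.commute)
  ultimately show ?thesis unfolding neg_hessian_def by (simp add: distrib_right)
qed

lemma partial_deriv_loglik_eq_score:
  "partial_deriv (loglik \<sigma> L n x \<nu> t y) \<theta> j = score j y"
  unfolding partial_deriv_loglik[OF interior] score_def centered_def ..

lemma Ihat1_eq: "Ihat1 \<sigma> L n x \<nu> t N \<theta> \<omega> j k = 1 / real N * (\<Sum>i<N. score j (\<omega> i) * score k (\<omega> i))"
  unfolding Ihat1_def partial_deriv_loglik_eq_score ..

lemma Ihat2_eq: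
  assumes "C2_fun \<sigma>"
  shows "Ihat2 \<sigma> L n x \<nu> t N \<theta> \<omega> j k = 1 / real N * (\<Sum>i<N. neg_hessian j k (\<omega> i))"
  unfolding Ihat2_def partial_deriv2_loglik[OF assms interior] neg_hessian_def centered_def
  by (simp add: sum_negf mult.commute)

end

context net_exp_family_at
begin

lemma cov_Ihat1:
  assumes N: "N \<ge> 1"
  shows "cov (PiM {..<N} (\<lambda>_. P)) (\<lambda>\<omega>. Ihat1 \<sigma> L n x \<nu> t N \<theta> \<omega> j k) (\<lambda>\<omega>. Ihat1 \<sigma> L n x \<nu> t N \<theta> \<omega> l q)
    = 1 / real N * (\<Sum>p\<in>{..<m}\<times>{..<m}. \<Sum>r\<in>{..<m}\<times>{..<m}.
        (jac \<theta> (fst p) j * jac \<theta> (snd p) k) * (jac \<theta> (fst r) l * jac \<theta> (snd r) q) *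
        (kurt_t \<nu> m t (out \<theta>) (fst p) (snd p) (fst r) (snd r) - I (fst p) (snd p) * I (fst r) (snd r)))"
proof -
  define X where "X p y = centered (fst p) y * centered (snd p) y" for p :: "nat \<times> nat" and y
  have X: "X p \<in> borel_measurable \<nu>" "\<bar>X p y\<bar> \<le> (centered_const * centered_const) * (1 + tnorm y) ^ (1 + 1)"
    if "p \<in> {..<m}\<times>{..<m}" for p y
    using that abs_mult_le_poly[OF abs_centered_le[of "fst p" y] abs_centered_le[of "snd p" y]]
    unfolding X_def by auto
  have int_X: "integrable P (X p)" "integrable P (\<lambda>y. X p y * X r y)"
    if "p \<in> {..<m}\<times>{..<m}" "r \<in> {..<m}\<times>{..<m}" for p r
     apply (rule integrable_P_poly[OF X(1)[OF that(1)] X(2)[OF that(1)]])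
    by (rule integrable_P_poly[OF _ abs_mult_le_poly[OF X(2)[OF that(1)] X(2)[OF that(2)]]])
       (use X(1)[OF that(1)] X(1)[OF that(2)] in measurable)
  have score_prod: "score i y * score i' y
      = (\<Sum>p\<in>{..<m}\<times>{..<m}. (jac \<theta> (fst p) i * jac \<theta> (snd p) i') * X p y)" for i i' y
    unfolding score_def X_def sum_product sum.cartesian_product by (intro sum.cong) (auto simp: mult_ac)
  have int_score: "integrable P (\<lambda>y. score i y * score i' y)"
    "integrable P (\<lambda>y. (score i y * score i' y) * (score i'' y * score i''' y))" for i i' i'' i'''
     apply (rule integrable_P_poly[OF _ abs_mult_le_poly[OF abs_score_le abs_score_le]], measurable)
    by (rule integrable_P_poly[OF _ abs_mult_le_poly[OF abs_mult_le_poly[OF abs_score_le abs_score_le]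
          abs_mult_le_poly[OF abs_score_le abs_score_le]]], measurable)
  have "cov (PiM {..<N} (\<lambda>_. P)) (\<lambda>\<omega>. Ihat1 \<sigma> L n x \<nu> t N \<theta> \<omega> j k) (\<lambda>\<omega>. Ihat1 \<sigma> L n x \<nu> t N \<theta> \<omega> l q)
      = 1 / real N * cov P (\<lambda>y. score j y * score k y) (\<lambda>y. score l y * score q y)"
    unfolding Ihat1_eq by (rule cov_sample_mean[OF prob_space_P N int_score(1) int_score(1) int_score(2)])
  also have "cov P (\<lambda>y. score j y * score k y) (\<lambda>y. score l y * score q y)
      = (\<Sum>p\<in>{..<m}\<times>{..<m}. \<Sum>r\<in>{..<m}\<times>{..<m}.
          (jac \<theta> (fst p) j * jac \<theta> (snd p) k) * (jac \<theta> (fst r) l * jac \<theta> (snd r) q) *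
          ((\<integral>y. X p y * X r y \<partial>P) - (\<integral>y. X p y \<partial>P) * (\<integral>y. X r y \<partial>P)))"
    unfolding score_prod using int_X by (intro cov_sum_sum[OF prob_space_P]) auto
  moreover have "(\<integral>y. X p y * X r y \<partial>P) = kurt_t \<nu> m t (out \<theta>) (fst p) (snd p) (fst r) (snd r)" for p r
    unfolding kurt_t_def X_def centered_def by (simp add: mult_ac)
  moreover have "(\<integral>y. X p y \<partial>P) = I (fst p) (snd p)" for p
    unfolding fisher_h_def X_def centered_def ..
  ultimately show ?thesis by simp
qed

lemma cov_Ihat2:
  assumes C2: "C2_fun \<sigma>" and N: "N \<ge> 1"
  shows "cov (PiM {..<N} (\<lambda>_. P)) (\<lambda>\<omega>. Ihat2 \<sigma> L n x \<nu> t N \<theta> \<omega> j k) (\<lambda>\<omega>. Ihat2 \<sigma> L n x \<nu> t N \<theta> \<omega> l q)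
    = 1 / real N * (\<Sum>a<m. \<Sum>b<m. hess \<theta> a j k * hess \<theta> b l q * I a b)"
proof -
  have int_H: "integrable P (neg_hessian i i')" "integrable P (\<lambda>y. neg_hessian i i' y * neg_hessian l' q' y)"
    for i i' l' q'
    by (rule integrable_P_poly[OF _ abs_neg_hessian_le], measurable)
       (rule integrable_P_poly[OF _ abs_mult_le_poly[OF abs_neg_hessian_le abs_neg_hessian_le]], measurable)
  have int_lin: "integrable P (\<lambda>y. \<Sum>a<m. (- hess \<theta> a i i') * centered a y)" for i i'
    using integrable_centered by auto
  have int_cc: "integrable P (\<lambda>y. centered a y * centered b y)" if "a < m" "b < m" for a b
    by (rule integrable_P_poly[OF _ abs_mult_le_poly[OF abs_centered_le[OF that(1)] abs_centered_le[OF that(2)]]])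
       (use measurable_centered[OF that(1)] measurable_centered[OF that(2)] in measurable)
  have "cov (PiM {..<N} (\<lambda>_. P)) (\<lambda>\<omega>. Ihat2 \<sigma> L n x \<nu> t N \<theta> \<omega> j k) (\<lambda>\<omega>. Ihat2 \<sigma> L n x \<nu> t N \<theta> \<omega> l q)
      = 1 / real N * cov P (neg_hessian j k) (neg_hessian l q)"
    unfolding Ihat2_eq[OF C2] by (rule cov_sample_mean[OF prob_space_P N int_H(1) int_H(1) int_H(2)])
  also have "cov P (neg_hessian j k) (neg_hessian l q)
      = cov P (\<lambda>y. \<Sum>a<m. (- hess \<theta> a j k) * centered a y) (\<lambda>y. \<Sum>b<m. (- hess \<theta> b l q) * centered b y)"
    unfolding neg_hessian_def cov_add_const[OF prob_space_P int_lin] ..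
  also have "\<dots> = (\<Sum>a<m. \<Sum>b<m. (- hess \<theta> a j k) * (- hess \<theta> b l q) *
        ((\<integral>y. centered a y * centered b y \<partial>P) - (\<integral>y. centered a y \<partial>P) * (\<integral>y. centered b y \<partial>P)))"
    using integrable_centered int_cc by (intro cov_sum_sum[OF prob_space_P]) auto
  also have "\<dots> = (\<Sum>a<m. \<Sum>b<m. hess \<theta> a j k * hess \<theta> b l q * I a b)"
    using integral_centered by (intro sum.cong refl) (simp add: fisher_h_def centered_def[symmetric])
  finally show ?thesis .
qed

end

lemma finite_param_idx: "finite (param_idx L n)"
proof (rule finite_subset)
  show "param_idx L n \<subseteq> (SIGMA l:{..<L}. {..<n (Suc l)} \<times> {..n l})"
    unfolding param_idx_def by auto
qed auto

lemma param_idx_nonempty: "0 < L \<Longrightarrow> 0 < n 1 \<Longrightarrow> param_idx L n \<noteq> {}"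
  unfolding param_idx_def by auto

context net_exp_family_at
begin

lemma norm_inf_cov_Ihat1_le:
  assumes N: "N \<ge> 1" and \<Theta>: "finite \<Theta>" "\<Theta> \<noteq> {}" and m: "0 < m"
  shows "norm_inf (\<lambda>(j, k, l, q). cov (PiM {..<N} (\<lambda>_. P)) (\<lambda>\<omega>. Ihat1 \<sigma> L n x \<nu> t N \<theta> \<omega> j k)
                                      (\<lambda>\<omega>. Ihat1 \<sigma> L n x \<nu> t N \<theta> \<omega> l q)) (\<Theta> \<times> \<Theta> \<times> \<Theta> \<times> \<Theta>)
         \<le> 1 / real N * norm_inf (\<lambda>(a, j). jac \<theta> a j) ({..<m} \<times> \<Theta>) ^ 4
            * norm_one (\<lambda>(a, b, c, d). kurt_t \<nu> m t (out \<theta>) a b c d - I a b * I c d)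
                       ({..<m} \<times> {..<m} \<times> {..<m} \<times> {..<m})"
proof (rule norm_inf_le)
  define J where "J = norm_inf (\<lambda>(a, j). jac \<theta> a j) ({..<m} \<times> \<Theta>)"
  have J: "\<bar>jac \<theta> a j\<bar> \<le> J" if "a < m" "j \<in> \<Theta>" for a j
    using abs_le_norm_inf[of "{..<m} \<times> \<Theta>" "(a, j)" "\<lambda>(a, j). jac \<theta> a j"] \<Theta>(1) that unfolding J_def by simp
  have J_nonneg: "0 \<le> J"
    using J[OF m] \<Theta>(2) by (meson abs_ge_zero all_not_in_conv order_trans)
  have jac2: "\<forall>p\<in>{..<m} \<times> {..<m}. \<bar>jac \<theta> (fst p) i * jac \<theta> (snd p) i'\<bar> \<le> J * J"
    if "i \<in> \<Theta>" "i' \<in> \<Theta>" for i i'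
  proof
    fix p assume "p \<in> {..<m} \<times> {..<m}"
    then show "\<bar>jac \<theta> (fst p) i * jac \<theta> (snd p) i'\<bar> \<le> J * J"
      unfolding abs_mult using that J_nonneg by (intro mult_mono J) auto
  qed
  fix jklq assume "jklq \<in> \<Theta> \<times> \<Theta> \<times> \<Theta> \<times> \<Theta>"
  then obtain j k l q where jklq: "jklq = (j, k, l, q)" "j \<in> \<Theta>" "k \<in> \<Theta>" "l \<in> \<Theta>" "q \<in> \<Theta>" by auto
  have "\<bar>cov (PiM {..<N} (\<lambda>_. P)) (\<lambda>\<omega>. Ihat1 \<sigma> L n x \<nu> t N \<theta> \<omega> j k) (\<lambda>\<omega>. Ihat1 \<sigma> L n x \<nu> t N \<theta> \<omega> l q)\<bar>
      = 1 / real N * \<bar>\<Sum>p\<in>{..<m}\<times>{..<m}. \<Sum>r\<in>{..<m}\<times>{..<m}.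
        (jac \<theta> (fst p) j * jac \<theta> (snd p) k) * (jac \<theta> (fst r) l * jac \<theta> (snd r) q) *
        (kurt_t \<nu> m t (out \<theta>) (fst p) (snd p) (fst r) (snd r) - I (fst p) (snd p) * I (fst r) (snd r))\<bar>"
    unfolding cov_Ihat1[OF N] by (simp add: abs_mult)
  also have "\<dots> \<le> 1 / real N * ((J * J) * (J * J) * (\<Sum>p\<in>{..<m}\<times>{..<m}. \<Sum>r\<in>{..<m}\<times>{..<m}.
          \<bar>kurt_t \<nu> m t (out \<theta>) (fst p) (snd p) (fst r) (snd r) - I (fst p) (snd p) * I (fst r) (snd r)\<bar>))"
    using jklq J_nonneg by (intro mult_left_mono abs_double_sum_le jac2) auto
  also have "\<dots> = 1 / real N * J ^ 4 * norm_one (\<lambda>(a, b, c, d). kurt_t \<nu> m t (out \<theta>) a b c d - I a b * I c d)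
                       ({..<m} \<times> {..<m} \<times> {..<m} \<times> {..<m})"
    unfolding norm_one_def by (simp add: sum.cartesian_product' power4_eq_xxxx mult_ac)
  finally show "\<bar>(\<lambda>(j, k, l, q). cov (PiM {..<N} (\<lambda>_. P)) (\<lambda>\<omega>. Ihat1 \<sigma> L n x \<nu> t N \<theta> \<omega> j k)
                                      (\<lambda>\<omega>. Ihat1 \<sigma> L n x \<nu> t N \<theta> \<omega> l q)) jklq\<bar>
      \<le> 1 / real N * J ^ 4 * norm_one (\<lambda>(a, b, c, d). kurt_t \<nu> m t (out \<theta>) a b c d - I a b * I c d)
                       ({..<m} \<times> {..<m} \<times> {..<m} \<times> {..<m})"
    using jklq by simp
qed (use \<Theta> in auto)

lemma norm_inf_cov_Ihat2_le:
  assumes C2: "C2_fun \<sigma>" and N: "N \<ge> 1" and \<Theta>: "finite \<Theta>" "\<Theta> \<noteq> {}" and m: "0 < m"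
  shows "norm_inf (\<lambda>(j, k, l, q). cov (PiM {..<N} (\<lambda>_. P)) (\<lambda>\<omega>. Ihat2 \<sigma> L n x \<nu> t N \<theta> \<omega> j k)
                                      (\<lambda>\<omega>. Ihat2 \<sigma> L n x \<nu> t N \<theta> \<omega> l q)) (\<Theta> \<times> \<Theta> \<times> \<Theta> \<times> \<Theta>)
         \<le> 1 / real N * norm_inf (\<lambda>(a, j, k). hess \<theta> a j k) ({..<m} \<times> \<Theta> \<times> \<Theta>) ^ 2
            * norm_one (\<lambda>(a, b). I a b) ({..<m} \<times> {..<m})"
proof (rule norm_inf_le)
  define H where "H = norm_inf (\<lambda>(a, j, k). hess \<theta> a j k) ({..<m} \<times> \<Theta> \<times> \<Theta>)"
  have H: "\<bar>hess \<theta> a j k\<bar> \<le> H" if "a < m" "j \<in> \<Theta>" "k \<in> \<Theta>" for a j k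
    using abs_le_norm_inf[of "{..<m} \<times> \<Theta> \<times> \<Theta>" "(a, j, k)" "\<lambda>(a, j, k). hess \<theta> a j k"] \<Theta>(1) that unfolding H_def by simp
  have H_nonneg: "0 \<le> H"
    using H[OF m] \<Theta>(2) by (meson abs_ge_zero all_not_in_conv order_trans)
  fix jklq assume "jklq \<in> \<Theta> \<times> \<Theta> \<times> \<Theta> \<times> \<Theta>"
  then obtain j k l q where jklq: "jklq = (j, k, l, q)" "j \<in> \<Theta>" "k \<in> \<Theta>" "l \<in> \<Theta>" "q \<in> \<Theta>" by auto
  have "\<bar>cov (PiM {..<N} (\<lambda>_. P)) (\<lambda>\<omega>. Ihat2 \<sigma> L n x \<nu> t N \<theta> \<omega> j k) (\<lambda>\<omega>. Ihat2 \<sigma> L n x \<nu> t N \<theta> \<omega> l q)\<bar>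
      = 1 / real N * \<bar>\<Sum>a<m. \<Sum>b<m. hess \<theta> a j k * hess \<theta> b l q * I a b\<bar>"
    unfolding cov_Ihat2[OF C2 N] by (simp add: abs_mult)
  also have "\<dots> \<le> 1 / real N * (H * H * (\<Sum>a<m. \<Sum>b<m. \<bar>I a b\<bar>))"
    using jklq H H_nonneg by (intro mult_left_mono abs_double_sum_le) auto
  also have "\<dots> = 1 / real N * H ^ 2 * norm_one (\<lambda>(a, b). I a b) ({..<m} \<times> {..<m})"
    unfolding norm_one_def by (simp add: sum.cartesian_product power2_eq_square case_prod_beta)
  finally show "\<bar>(\<lambda>(j, k, l, q). cov (PiM {..<N} (\<lambda>_. P)) (\<lambda>\<omega>. Ihat2 \<sigma> L n x \<nu> t N \<theta> \<omega> j k)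
                                      (\<lambda>\<omega>. Ihat2 \<sigma> L n x \<nu> t N \<theta> \<omega> l q)) jklq\<bar>
      \<le> 1 / real N * H ^ 2 * norm_one (\<lambda>(a, b). I a b) ({..<m} \<times> {..<m})"
    using jklq by simp
qed (use \<Theta> in auto)

end
theorem mainTheorem19:
  fixes \<sigma> :: "real \<Rightarrow> real" and L N :: nat and n :: "nat \<Rightarrow> nat" and x :: "nat \<Rightarrow> real"
    and \<theta> :: param and \<nu> :: "'y measure" and t :: "'y \<Rightarrow> nat \<Rightarrow> real"
  assumes "1 \<le> L" and "\<forall>l\<in>{1..L}. 1 \<le> n l" and "1 \<le> N"
    and "\<forall>z. \<sigma> differentiable (at z)"
    and "\<forall>a<n L. (\<lambda>y. t y a) \<in> borel_measurable \<nu>"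
    and "in_interior_nps \<nu> (n L) t (net_out \<sigma> L n x \<theta>)"
  shows "let hL = net_out \<sigma> L n x \<theta>; m = n L; \<Theta> = param_idx L n;
             \<Omega> = PiM {..<N} (\<lambda>_. expfam \<nu> m t hL);
             J = (\<lambda>(a, j). partial_deriv (\<lambda>\<theta>'. net_out \<sigma> L n x \<theta>' a) \<theta> j);
             H = (\<lambda>(a, j, k). partial_deriv
                    (\<lambda>\<theta>'. partial_deriv (\<lambda>\<theta>''. net_out \<sigma> L n x \<theta>'' a) \<theta>' k) \<theta> j);
             I = fisher_h \<nu> m t hL;
             K = kurt_t \<nu> m t hL
         in norm_inf (\<lambda>(j, k, l, q). cov \<Omega> (\<lambda>\<omega>. Ihat1 \<sigma> L n x \<nu> t N \<theta> \<omega> j k)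
                                          (\<lambda>\<omega>. Ihat1 \<sigma> L n x \<nu> t N \<theta> \<omega> l q))
                     (\<Theta> \<times> \<Theta> \<times> \<Theta> \<times> \<Theta>)
              \<le> 1 / real N * norm_inf J ({..<m} \<times> \<Theta>) ^ 4
                 * norm_one (\<lambda>(a, b, c, d). K a b c d - I a b * I c d)
                            ({..<m} \<times> {..<m} \<times> {..<m} \<times> {..<m})
          \<and> (C2_fun \<sigma> \<longrightarrow>
              norm_inf (\<lambda>(j, k, l, q). cov \<Omega> (\<lambda>\<omega>. Ihat2 \<sigma> L n x \<nu> t N \<theta> \<omega> j k)
                                              (\<lambda>\<omega>. Ihat2 \<sigma> L n x \<nu> t N \<theta> \<omega> l q))
                       (\<Theta> \<times> \<Theta> \<times> \<Theta> \<times> \<Theta>)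
                \<le> 1 / real N * norm_inf H ({..<m} \<times> \<Theta> \<times> \<Theta>) ^ 2
                   * norm_one (\<lambda>(a, b). I a b) ({..<m} \<times> {..<m}))"
proof -
  interpret exp_family \<nu> "n L" t using assms(5) by unfold_locales auto
  obtain e where "interior_radius (net_out \<sigma> L n x \<theta>) e"
    using assms(6) unfolding in_interior_nps_def interior_radius_def by blast
  then interpret net_exp_family_at \<nu> "n L" t \<sigma> L n x \<theta> e
    using assms(4) by unfold_locales auto
  have "1 \<le> n 1" "1 \<le> n L" using assms(1,2) by auto
  then have n: "0 < n 1" and m: "0 < n L" by simp_all
  have \<Theta>: "finite (param_idx L n)" "param_idx L n \<noteq> {}"
    using finite_param_idx param_idx_nonempty[of L n] n assms(1) by auto
  show ?thesis
    using norm_inf_cov_Ihat1_le[OF assms(3) \<Theta> m] norm_inf_cov_Ihat2_le[OF _ assms(3) \<Theta> m]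
    unfolding Let_def jac_def hess_def by blast
qed
end
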